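(* Consider $N$ agents with dynamics $p_i^{(k+1)}=p_i^{(k)}+v_i^{(k)}$, $v_i^{(k+1)}=v_i^{(k)}+u_i^{(k)}$ and control law $u_i^{(k)}=\sum_{j}\gamma_1a_{ij}^{(k)}(p_j^{(k)}-p_i^{(k)})+\gamma_2a_{ij}^{(k)}(v_j^{(k)}-v_i^{(k)})$. Let $\mathcal{A}^{(0)}=(a_{ij}^{(0)})$ be a symmetric nonnegative matrix with zero diagonal whose graph is connected, and assume $\gamma_2>\gamma_1>0$ and $\gamma_1-2\gamma_2>-4/\mu_i^{(0)}$ for every nonzero eigenvalue $\mu_i^{(0)}$ of the Laplacian $L^{(0)}$ of $\mathcal{A}^{(0)}$. Then there exists $\delta_A>0$ with $\delta_A<\min\{a_{ij}^{(0)}: a_{ij}^{(0)}>0\}$ such that the following holds: if for every $k\ge0$ and every edge $\{i,j\}$ (i.e. $a_{ij}^{(0)}>0$) the weight is $a_{ij}^{(k)}=a_{ji}^{(k)}=\alpha_{i,j}^{(k)}\alpha_{j,i}^{(k)}$ for arbitrary numbers $\alpha_{i,j}^{(k)},\alpha_{j,i}^{(k)}\in\big(\sqrt{a_{ij}^{(0)}-\delta_A},\sqrt{a_{ij}^{(0)}+\delta_A}\big)$, and $a_{ij}^{(k)}=0$ for non-edges, then the agents reach consensus for every initial condition: $p_i^{(k)}-p_j^{(k)}\to0$ and $v_i^{(k)}-v_j^{(k)}\to0$ as $k\to\infty$ for all $i,j$.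
   Context: The Laplacian $L=(l_{ij})$ of a symmetric nonnegative matrix $\mathcal{A}=(a_{ij})$ with zero diagonal is $l_{ij}=-a_{ij}$ for $i\neq j$, $l_{ii}=\sum_{j\neq i}a_{ij}$. The factorization of each weight into two random factors, each held privately by one endpoint, models the decoupled-weight scheme used together with Paillier encryption; the values of the factors may be arbitrary within the stated intervals. *)

theory Defs
  imports Complex_Main
begin

text \<open>Agents are indexed by 0..N-1; a weight matrix is a function nat => nat => real,
only its entries with indices below N are relevant.\<close>

definition laplacian :: "nat \<Rightarrow> (nat \<Rightarrow> nat \<Rightarrow> real) \<Rightarrow> nat \<Rightarrow> nat \<Rightarrow> real" where
  "laplacian N A i j = (if i = j then (\<Sum>l\<in>{..<N} - {i}. A i l) else - A i j)"

definition lap_eigenvalue :: "nat \<Rightarrow> (nat \<Rightarrow> nat \<Rightarrow> real) \<Rightarrow> real \<Rightarrow> bool" where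
  "lap_eigenvalue N A \<mu> \<longleftrightarrow>
     (\<exists>x :: nat \<Rightarrow> real. (\<exists>i<N. x i \<noteq> 0) \<and>
        (\<forall>i<N. (\<Sum>j<N. laplacian N A i j * x j) = \<mu> * x i))"

definition graph_connected :: "nat \<Rightarrow> (nat \<Rightarrow> nat \<Rightarrow> real) \<Rightarrow> bool" where
  "graph_connected N A \<longleftrightarrow>
     (\<forall>i<N. \<forall>j<N. (\<lambda>a b. a < N \<and> b < N \<and> A a b > 0)\<^sup>*\<^sup>* i j)"

end

theory Submission
  imports Defs "HOL-Analysis.Analysis"
begin

text \<open>In disagreement coordinates (deviations from the mean; the mean velocity is invariant)
  the closed loop is driven by the Laplacian \<open>L\<^sub>k\<close> of the current weights. If the spectrum
  of \<open>L\<close> on the zero-sum subspace lies in \<open>[c, \<Lambda>]\<close> with \<open>\<Lambda> (2\<gamma>\<^sub>2 - \<gamma>\<^sub>1) < 4\<close>, the quadratic form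
  \<open>V = \<gamma>\<^sub>1 p\<^sup>T L p + \<kappa> |L p|\<^sup>2 + 2\<sigma> (L p)\<^sup>T v + |v|\<^sup>2\<close>, \<open>\<kappa> = \<sigma>(\<gamma>\<^sub>1 + \<gamma>\<^sub>2) - \<gamma>\<^sub>1\<gamma>\<^sub>2\<close>,
  is positive definite and strictly decreasing for a suitable \<open>\<sigma>\<close>; as \<open>V\<close> depends Lipschitz
  continuously on the weights, it still contracts by a fixed factor along any weight sequence
  whose consecutive terms are close. The largest eigenvalue of \<open>L\<^sup>(\<^sup>0\<^sup>)\<close> (maximum of the Rayleigh
  quotient) and connectivity (positive minimum on the zero-sum sphere) supply such bounds,
  with room to spare, for all weights within a small \<open>\<delta>\<close> of \<open>A\<^sup>(\<^sup>0\<^sup>)\<close>, and products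
  \<open>\<alpha>\<^sub>i\<^sub>j\<alpha>\<^sub>j\<^sub>i\<close> of factors in \<open>(\<surd>(a\<^sub>i\<^sub>j - \<delta>), \<surd>(a\<^sub>i\<^sub>j + \<delta>))\<close> are such weights.\<close>

section \<open>Vectors and graph Laplacians\<close>

definition dot :: "nat \<Rightarrow> (nat \<Rightarrow> real) \<Rightarrow> (nat \<Rightarrow> real) \<Rightarrow> real" where
  "dot N x y = (\<Sum>i<N. x i * y i)"

definition lap :: "nat \<Rightarrow> (nat \<Rightarrow> nat \<Rightarrow> real) \<Rightarrow> (nat \<Rightarrow> real) \<Rightarrow> nat \<Rightarrow> real" where
  "lap N W x = (\<lambda>i. if i < N then (\<Sum>j<N. W i j * (x i - x j)) else 0)"

abbreviation lap_form :: "nat \<Rightarrow> (nat \<Rightarrow> nat \<Rightarrow> real) \<Rightarrow> (nat \<Rightarrow> real) \<Rightarrow> real" where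
  "lap_form N W x \<equiv> dot N x (lap N W x)"

definition symmetric_weights :: "nat \<Rightarrow> (nat \<Rightarrow> nat \<Rightarrow> real) \<Rightarrow> bool" where
  "symmetric_weights N W \<longleftrightarrow> (\<forall>i<N. \<forall>j<N. W i j = W j i)"

definition nonneg_weights :: "nat \<Rightarrow> (nat \<Rightarrow> nat \<Rightarrow> real) \<Rightarrow> bool" where
  "nonneg_weights N W \<longleftrightarrow> (\<forall>i<N. \<forall>j<N. 0 \<le> W i j)"

lemma dot_commute: "dot N x y = dot N y x"
  by (simp add: dot_def mult.commute)

lemma dot_add_left: "dot N (\<lambda>i. x i + y i) z = dot N x z + dot N y z"
  and dot_add_right: "dot N z (\<lambda>i. x i + y i) = dot N z x + dot N z y"
  and dot_diff_left: "dot N (\<lambda>i. x i - y i) z = dot N x z - dot N y z"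
  and dot_diff_right: "dot N z (\<lambda>i. x i - y i) = dot N z x - dot N z y"
  and dot_scale_left: "dot N (\<lambda>i. a * x i) z = a * dot N x z"
  and dot_scale_right: "dot N z (\<lambda>i. a * x i) = a * dot N z x"
  by (simp_all add: dot_def algebra_simps sum.distrib sum_subtractf sum_distrib_left)

lemmas dot_linear = dot_add_left dot_add_right dot_diff_left dot_diff_right
  dot_scale_left dot_scale_right

lemma dot_self_nonneg: "0 \<le> dot N x x"
  by (simp add: dot_def sum_nonneg)

lemma dot_cong:
  "(\<And>i. i < N \<Longrightarrow> x i = x' i) \<Longrightarrow> (\<And>i. i < N \<Longrightarrow> y i = y' i) \<Longrightarrow> dot N x y = dot N x' y'"
  unfolding dot_def by (auto intro!: sum.cong)

lemma dot_self_eq_0_imp: "dot N x x = 0 \<Longrightarrow> i < N \<Longrightarrow> x i = 0"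
  unfolding dot_def by (simp add: sum_nonneg_eq_0_iff)

lemma square_le_dot_self: "i < N \<Longrightarrow> (x i)\<^sup>2 \<le> dot N x x"
  unfolding dot_def power2_eq_square[symmetric] by (rule member_le_sum) auto

lemma diff_square_le: "(a - b)\<^sup>2 \<le> 2 * a\<^sup>2 + 2 * (b::real)\<^sup>2"
proof -
  have "2 * a\<^sup>2 + 2 * b\<^sup>2 - (a - b)\<^sup>2 = (a + b)\<^sup>2" by (simp add: power2_eq_square algebra_simps)
  thus ?thesis by (metis diff_ge_0_iff_ge zero_le_power2)
qed

lemma diff_square_le_dot_self: "i < N \<Longrightarrow> j < N \<Longrightarrow> (x i - x j)\<^sup>2 \<le> 4 * dot N x x"
  using diff_square_le[of "x i" "x j"] square_le_dot_self[of i N x] square_le_dot_self[of j N x]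
  by linarith

lemma quadratic_nonneg_discriminant:
  fixes a b c :: real
  assumes nonneg: "\<And>t. 0 \<le> a + 2 * b * t + c * t\<^sup>2" and "0 \<le> c"
  shows "b\<^sup>2 \<le> a * c"
proof (cases "c = 0")
  case True
  have "b = 0"
  proof (rule ccontr)
    assume "b \<noteq> 0"
    have "0 \<le> a + 2 * b * (- (a + 1) / (2 * b)) + c * (- (a + 1) / (2 * b))\<^sup>2" by (rule nonneg)
    also have "\<dots> = -1" using True \<open>b \<noteq> 0\<close> by (simp add: field_simps)
    finally show False by simp
  qed
  thus ?thesis using True by simp
next
  case False
  hence c: "c > 0" using \<open>0 \<le> c\<close> by simp
  have "0 \<le> a + 2 * b * (- b / c) + c * (- b / c)\<^sup>2" by (rule nonneg)
  also have "\<dots> = a - b\<^sup>2 / c" using c by (simp add: field_simps power2_eq_square)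
  finally show ?thesis using c by (simp add: field_simps mult.commute)
qed

lemma dot_cauchy_schwarz: "(dot N x y)\<^sup>2 \<le> dot N x x * dot N y y"
proof (rule quadratic_nonneg_discriminant)
  fix t
  have "0 \<le> dot N (\<lambda>i. x i + t * y i) (\<lambda>i. x i + t * y i)" by (rule dot_self_nonneg)
  also have "\<dots> = dot N x x + 2 * dot N x y * t + dot N y y * t\<^sup>2"
    by (simp add: dot_linear dot_commute[of N y x] power2_eq_square algebra_simps)
  finally show "0 \<le> dot N x x + 2 * dot N x y * t + dot N y y * t\<^sup>2" .
qed (rule dot_self_nonneg)

lemma dot_young:
  assumes "d > 0"
  shows "2 * \<bar>dot N u w\<bar> \<le> d * dot N u u + dot N w w / d"
proof -
  have "0 \<le> dot N (\<lambda>i. d * u i - w i) (\<lambda>i. d * u i - w i)"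
    and "0 \<le> dot N (\<lambda>i. d * u i + w i) (\<lambda>i. d * u i + w i)"
    by (rule dot_self_nonneg)+
  hence "2 * d * dot N u w \<le> d * d * dot N u u + dot N w w"
    and "- 2 * d * dot N u w \<le> d * d * dot N u u + dot N w w"
    by (simp_all add: dot_linear dot_commute[of N w u] algebra_simps)
  hence "d * (2 * \<bar>dot N u w\<bar>) \<le> d * (d * dot N u u + dot N w w / d)"
    using assms by (auto simp: abs_if algebra_simps)
  thus ?thesis using assms by simp
qed

lemma square_sum_le: "(\<Sum>j<N. f j)\<^sup>2 \<le> real N * (\<Sum>j<N. (f j)\<^sup>2)"
  using dot_cauchy_schwarz[of N f "\<lambda>_. 1"] by (simp add: dot_def power2_eq_square mult_ac)

lemma lap_add: "lap N W (\<lambda>i. x i + y i) = (\<lambda>i. lap N W x i + lap N W y i)"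
  and lap_scale: "lap N W (\<lambda>i. a * x i) = (\<lambda>i. a * lap N W x i)"
  and lap_diff_weights: "lap N (\<lambda>i j. W' i j - W i j) x = (\<lambda>i. lap N W' x i - lap N W x i)"
  by (auto simp: lap_def algebra_simps sum.distrib sum_subtractf sum_distrib_left)

lemma lap_shift: "lap N W (\<lambda>i. x i - m) = lap N W x"
  by (auto simp: lap_def)

lemma lap_cong: "(\<And>i. i < N \<Longrightarrow> x i = y i) \<Longrightarrow> lap N W x = lap N W y"
  unfolding lap_def by (auto intro!: sum.cong)

lemma dot_lap: "dot N y (lap N W x) = (\<Sum>i<N. \<Sum>j<N. W i j * y i * (x i - x j))"
  unfolding dot_def lap_def by (auto intro!: sum.cong simp: sum_distrib_left mult_ac)

lemma symmetric_double_sum_swap: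
  assumes "symmetric_weights N W"
  shows "(\<Sum>i<N. \<Sum>j<N. W i j * f i j) = (\<Sum>i<N. \<Sum>j<N. W i j * f j i)"
proof -
  have "(\<Sum>i<N. \<Sum>j<N. W i j * f i j) = (\<Sum>j<N. \<Sum>i<N. W i j * f i j)"
    by (rule sum.swap)
  also have "\<dots> = (\<Sum>j<N. \<Sum>i<N. W j i * f i j)"
    using assms unfolding symmetric_weights_def by (intro sum.cong refl) auto
  finally show ?thesis .
qed

lemma lap_self_adjoint:
  assumes "symmetric_weights N W"
  shows "dot N y (lap N W x) = dot N x (lap N W y)"
  using symmetric_double_sum_swap[OF assms, of "\<lambda>i j. y i * x j"]
  unfolding dot_lap by (simp add: algebra_simps sum_subtractf)

lemma lap_form_eq:
  assumes "symmetric_weights N W"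
  shows "lap_form N W x = (\<Sum>i<N. \<Sum>j<N. W i j * (x i - x j)\<^sup>2) / 2"
proof -
  have "(\<Sum>i<N. \<Sum>j<N. W i j * (x i - x j)\<^sup>2) =
        (\<Sum>i<N. \<Sum>j<N. W i j * (x i * (x i - x j))) + (\<Sum>i<N. \<Sum>j<N. W i j * (x j * (x j - x i)))"
    by (simp add: sum.distrib[symmetric] power2_eq_square algebra_simps)
  also have "\<dots> = 2 * (\<Sum>i<N. \<Sum>j<N. W i j * x i * (x i - x j))"
    using symmetric_double_sum_swap[OF assms, of "\<lambda>i j. x i * (x i - x j)"] by (simp add: mult_ac)
  finally show ?thesis unfolding dot_lap by simp
qed

lemma lap_sum_zero:
  assumes "symmetric_weights N W"
  shows "(\<Sum>i<N. lap N W x i) = 0"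
  using symmetric_double_sum_swap[OF assms, of "\<lambda>i j. x i - x j"]
  unfolding lap_def by (simp add: algebra_simps sum_subtractf)

lemma lap_form_nonneg:
  assumes "symmetric_weights N W" "nonneg_weights N W"
  shows "0 \<le> lap_form N W x"
  using assms(2) unfolding lap_form_eq[OF assms(1)] nonneg_weights_def by (auto intro!: sum_nonneg)

lemma lap_form_mono:
  assumes "symmetric_weights N W" "symmetric_weights N W'" "\<And>i j. i < N \<Longrightarrow> j < N \<Longrightarrow> W i j \<le> W' i j"
  shows "lap_form N W y \<le> lap_form N W' y"
  unfolding lap_form_eq[OF assms(1)] lap_form_eq[OF assms(2)]
  using assms(3) by (auto intro!: divide_right_mono sum_mono mult_right_mono)

lemma lap_form_scale_weights:
  "lap_form N (\<lambda>i j. a * W i j) y = a * lap_form N W y"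
  unfolding dot_lap by (simp add: sum_distrib_left mult.assoc)

lemma lap_form_add_const_weights:
  assumes "symmetric_weights N W"
  shows "lap_form N (\<lambda>i j. W i j + e) y = lap_form N W y + e * (\<Sum>i<N. \<Sum>j<N. (y i - y j)\<^sup>2) / 2"
proof -
  have shifted: "symmetric_weights N (\<lambda>i j. W i j + e)"
    using assms unfolding symmetric_weights_def by auto
  show ?thesis unfolding lap_form_eq[OF assms] lap_form_eq[OF shifted]
    by (simp add: distrib_right sum.distrib sum_distrib_left add_divide_distrib)
qed

lemma double_sum_diff_square_le: "(\<Sum>i<N. \<Sum>j<N. (y i - y j)\<^sup>2) \<le> 4 * real N * dot N y y"
proof -
  have "(\<Sum>i<N. \<Sum>j<N. (y i - y j)\<^sup>2) \<le> (\<Sum>i<N. \<Sum>j<N. 2 * (y i)\<^sup>2 + 2 * (y j)\<^sup>2)"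
    by (intro sum_mono diff_square_le)
  also have "\<dots> = 4 * real N * dot N y y"
    by (simp add: dot_def sum.distrib sum_distrib_left power2_eq_square algebra_simps)
  finally show ?thesis .
qed

lemma lap_form_homogeneous: "lap_form N W (\<lambda>i. a * x i) = a\<^sup>2 * lap_form N W x"
  by (simp add: lap_scale dot_scale_left dot_scale_right power2_eq_square)

lemma lap_form_cong: "(\<And>i. i < N \<Longrightarrow> x i = y i) \<Longrightarrow> lap_form N W x = lap_form N W y"
  using lap_cong[of N x y W] by (auto intro: dot_cong)

lemma continuous_on_lap_form: "continuous_on UNIV (lap_form N W)"
  unfolding dot_lap
  by (intro continuous_on_sum continuous_on_mult continuous_on_diff continuous_on_const
      continuous_on_product_coordinates)

lemma lap_form_cauchy_schwarz:
  assumes "symmetric_weights N W" "nonneg_weights N W"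
  shows "(dot N x (lap N W y))\<^sup>2 \<le> lap_form N W x * lap_form N W y"
proof (rule quadratic_nonneg_discriminant)
  fix t
  have "0 \<le> lap_form N W (\<lambda>i. x i + t * y i)" by (rule lap_form_nonneg[OF assms])
  also have "\<dots> = lap_form N W x + 2 * dot N x (lap N W y) * t + lap_form N W y * t\<^sup>2"
    by (simp add: lap_add lap_scale dot_linear lap_self_adjoint[OF assms(1), of y x]
        power2_eq_square algebra_simps)
  finally show "0 \<le> lap_form N W x + 2 * dot N x (lap N W y) * t + lap_form N W y * t\<^sup>2" .
qed (rule lap_form_nonneg[OF assms])

lemma lap_norm_le:
  assumes W: "symmetric_weights N W" "nonneg_weights N W"
    and upper: "\<And>y. lap_form N W y \<le> \<Lambda> * dot N y y" and "0 \<le> \<Lambda>"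
  shows "dot N (lap N W x) (lap N W x) \<le> \<Lambda> * lap_form N W x"
proof -
  define z where "z = lap N W x"
  have "(dot N z z)\<^sup>2 = (dot N x (lap N W z))\<^sup>2" unfolding z_def by (simp add: lap_self_adjoint[OF W(1)])
  also have "\<dots> \<le> lap_form N W x * lap_form N W z" by (rule lap_form_cauchy_schwarz[OF W])
  also have "\<dots> \<le> lap_form N W x * (\<Lambda> * dot N z z)"
    using upper lap_form_nonneg[OF W] by (intro mult_left_mono) auto
  finally have "dot N z z * dot N z z \<le> (\<Lambda> * lap_form N W x) * dot N z z"
    by (simp add: power2_eq_square mult_ac)
  moreover have "0 \<le> \<Lambda> * lap_form N W x" using \<open>0 \<le> \<Lambda>\<close> lap_form_nonneg[OF W] by simp
  ultimately have "dot N z z \<le> \<Lambda> * lap_form N W x"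
    using dot_self_nonneg[of N z] by (cases "dot N z z = 0") auto
  thus ?thesis unfolding z_def .
qed

lemma lap_norm_ge:
  assumes lower: "c * dot N x x \<le> lap_form N W x" and "0 \<le> c"
  shows "c\<^sup>2 * dot N x x \<le> dot N (lap N W x) (lap N W x)"
proof -
  have "(c * dot N x x)\<^sup>2 \<le> (lap_form N W x)\<^sup>2"
    using lower \<open>0 \<le> c\<close> dot_self_nonneg[of N x] by (intro power_mono) auto
  also have "\<dots> \<le> dot N x x * dot N (lap N W x) (lap N W x)" by (rule dot_cauchy_schwarz)
  finally have "dot N x x * (c\<^sup>2 * dot N x x) \<le> dot N x x * dot N (lap N W x) (lap N W x)"
    by (simp add: power2_eq_square mult_ac)
  thus ?thesis using dot_self_nonneg[of N x] dot_self_nonneg[of N "lap N W x"]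
    by (cases "dot N x x = 0") auto
qed

lemma lap_norm_weight_bound:
  assumes D: "\<And>i j. i < N \<Longrightarrow> j < N \<Longrightarrow> \<bar>D i j\<bar> \<le> d"
  shows "dot N (lap N D x) (lap N D x) \<le> 4 * (real N)\<^sup>2 * d\<^sup>2 * dot N x x"
proof -
  have row: "(lap N D x i)\<^sup>2 \<le> real N * d\<^sup>2 * (2 * real N * (x i)\<^sup>2 + 2 * dot N x x)" if i: "i < N" for i
  proof -
    have "(lap N D x i)\<^sup>2 \<le> real N * (\<Sum>j<N. (D i j * (x i - x j))\<^sup>2)"
      using i square_sum_le by (simp add: lap_def)
    also have "\<dots> \<le> real N * (\<Sum>j<N. d\<^sup>2 * (2 * (x i)\<^sup>2 + 2 * (x j)\<^sup>2))"
    proof (intro mult_left_mono sum_mono)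
      fix j assume "j \<in> {..<N}"
      hence "(D i j)\<^sup>2 \<le> d\<^sup>2" using D i by (metis abs_le_square_iff abs_ge_zero abs_of_nonneg lessThan_iff order_trans)
      thus "(D i j * (x i - x j))\<^sup>2 \<le> d\<^sup>2 * (2 * (x i)\<^sup>2 + 2 * (x j)\<^sup>2)"
        unfolding power_mult_distrib by (intro mult_mono diff_square_le) auto
    qed simp
    also have "\<dots> = real N * d\<^sup>2 * (2 * real N * (x i)\<^sup>2 + 2 * dot N x x)"
      by (simp add: dot_def sum.distrib sum_distrib_left power2_eq_square algebra_simps)
    finally show ?thesis .
  qed
  have "dot N (lap N D x) (lap N D x) = (\<Sum>i<N. (lap N D x i)\<^sup>2)"
    by (simp add: dot_def power2_eq_square)
  also have "\<dots> \<le> (\<Sum>i<N. real N * d\<^sup>2 * (2 * real N * (x i)\<^sup>2 + 2 * dot N x x))"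
    using row by (intro sum_mono) auto
  also have "\<dots> = 4 * (real N)\<^sup>2 * d\<^sup>2 * dot N x x"
    by (simp add: dot_def sum.distrib sum_distrib_left power2_eq_square algebra_simps)
  finally show ?thesis .
qed

lemma laplacian_mult_eq_lap:
  assumes "i < N" "A i i = 0"
  shows "(\<Sum>j<N. laplacian N A i j * x j) = lap N A x i"
proof -
  have iN: "i \<in> {..<N}" using assms by simp
  have "(\<Sum>j<N. laplacian N A i j * x j) = laplacian N A i i * x i + (\<Sum>j\<in>{..<N}-{i}. laplacian N A i j * x j)"
    by (rule sum.remove[OF _ iN]) simp
  also have "\<dots> = (\<Sum>j\<in>{..<N}-{i}. A i j * (x i - x j))"
    by (simp add: laplacian_def right_diff_distrib sum_subtractf sum_distrib_right sum_negf)
  also have "\<dots> = (\<Sum>j<N. A i j * (x i - x j))"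
    using sum.remove[OF _ iN, of "\<lambda>j. A i j * (x i - x j)"] assms by simp
  finally show ?thesis using assms by (simp add: lap_def)
qed

section \<open>Extremal Rayleigh quotients\<close>

definition unit_sphere :: "nat \<Rightarrow> (nat \<Rightarrow> real) set" where
  "unit_sphere N = {x. (\<forall>i\<ge>N. x i = 0) \<and> (\<Sum>i<N. (x i)\<^sup>2) = 1}"

lemma compact_unit_sphere: "compact (unit_sphere N)"
proof -
  define K where "K = PiE UNIV (\<lambda>i::nat. if i < N then {-1..1::real} else {0})"
  have "compactin (product_topology (\<lambda>i. euclidean) UNIV) K"
    unfolding K_def by (simp only: compactin_PiE) (auto simp: compactin_euclidean_iff)
  hence "compact K" by (simp add: euclidean_product_topology compactin_euclidean_iff)
  moreover have "closed (unit_sphere N)"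
  proof -
    have "unit_sphere N = (\<Inter>i\<in>{N..}. {x. x i = 0}) \<inter> {x. (\<Sum>i<N. (x i)\<^sup>2) = 1}"
      unfolding unit_sphere_def by auto
    moreover have "closed {x::nat\<Rightarrow>real. x i = 0}" for i
      by (intro closed_Collect_eq continuous_on_product_coordinates continuous_on_const)
    moreover have "closed {x::nat\<Rightarrow>real. (\<Sum>i<N. (x i)\<^sup>2) = 1}"
      by (intro closed_Collect_eq continuous_on_sum continuous_on_power
          continuous_on_product_coordinates continuous_on_const)
    ultimately show ?thesis by (simp add: closed_INT closed_Int)
  qed
  moreover have "unit_sphere N \<subseteq> K"
  proof
    fix x assume x: "x \<in> unit_sphere N"
    have "x i \<in> {-1..1}" if "i < N" for i
    proof -
      have "(x i)\<^sup>2 \<le> 1" using x that square_le_dot_self[of i N x] by (simp add: unit_sphere_def dot_def power2_eq_square)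
      thus ?thesis by (simp add: abs_square_le_1 abs_le_iff)
    qed
    thus "x \<in> K" using x unfolding K_def unit_sphere_def by auto
  qed
  ultimately show ?thesis by (metis compact_Int_closed inf.absorb_iff2)
qed

lemma homogeneous_bound_of_unit_sphere:
  fixes F :: "(nat \<Rightarrow> real) \<Rightarrow> real"
  assumes hom: "\<And>x a. F (\<lambda>i. a * x i) = a\<^sup>2 * F x"
    and cong: "\<And>x y. (\<And>i. i < N \<Longrightarrow> x i = y i) \<Longrightarrow> F x = F y"
    and P_scale: "\<And>x a. P x \<Longrightarrow> P (\<lambda>i. if i < N then a * x i else 0)"
    and bound: "\<And>x. x \<in> unit_sphere N \<Longrightarrow> P x \<Longrightarrow> c \<le> F x"
    and "P x"
  shows "c * dot N x x \<le> F x"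
proof (cases "dot N x x = 0")
  case True
  have "F x = F (\<lambda>i. 0 * x i)" using dot_self_eq_0_imp[OF True] by (intro cong) auto
  also have "\<dots> = 0" using hom[of 0 x] by simp
  finally show ?thesis using True by simp
next
  case False
  define r where "r = dot N x x"
  have r: "r > 0" using False dot_self_nonneg[of N x] unfolding r_def by simp
  define y where "y = (\<lambda>i. if i < N then (1 / sqrt r) * x i else 0)"
  have "F y = F (\<lambda>i. (1 / sqrt r) * x i)" unfolding y_def by (intro cong) auto
  also have "\<dots> = (1 / sqrt r)\<^sup>2 * F x" by (rule hom)
  also have "\<dots> = F x / r" using r by (simp add: power_divide)
  finally have Fy: "F y = F x / r" .
  have "(\<Sum>i<N. (y i)\<^sup>2) = (\<Sum>i<N. (1 / r) * (x i * x i))"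
    unfolding y_def using r by (intro sum.cong) (auto simp: power2_eq_square power_divide)
  also have "\<dots> = 1" using r unfolding sum_distrib_left[symmetric] r_def dot_def by simp
  finally have "y \<in> unit_sphere N" unfolding unit_sphere_def y_def by auto
  hence "c \<le> F x / r" using bound P_scale[OF \<open>P x\<close>] Fy unfolding y_def by fastforce
  thus ?thesis using r unfolding r_def[symmetric] by (simp add: field_simps)
qed

text \<open>A maximiser of the Rayleigh quotient is an eigenvector: the quadratic
  \<open>t \<mapsto> \<Lambda> |x + t e\<^sub>i|\<^sup>2 - (x + t e\<^sub>i)\<^sup>T L (x + t e\<^sub>i)\<close> is nonnegative and vanishes at \<open>t = 0\<close>,
  so its linear coefficient \<open>\<Lambda> x\<^sub>i - (L x)\<^sub>i\<close> vanishes.\<close>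
lemma lap_eigenvector_of_max:
  assumes W: "symmetric_weights N W" and max: "\<And>y. lap_form N W y \<le> \<Lambda> * dot N y y"
    and x: "dot N x x = 1" "lap_form N W x = \<Lambda>" and "i < N"
  shows "lap N W x i = \<Lambda> * x i"
proof -
  define e where "e = (\<lambda>j. if j = i then 1 else (0::real))"
  have e_dot: "dot N e y = y i" for y
  proof -
    have "dot N e y = (\<Sum>j<N. if j = i then y j else 0)" unfolding dot_def e_def by (intro sum.cong) auto
    thus ?thesis using \<open>i < N\<close> by simp
  qed
  define b where "b = \<Lambda> * dot N x e - dot N e (lap N W x)"
  have "b\<^sup>2 \<le> 0 * (\<Lambda> * dot N e e - lap_form N W e)"
  proof (rule quadratic_nonneg_discriminant)
    fix t
    have "lap_form N W (\<lambda>j. x j + t * e j) \<le> \<Lambda> * dot N (\<lambda>j. x j + t * e j) (\<lambda>j. x j + t * e j)"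
      by (rule max)
    thus "0 \<le> 0 + 2 * b * t + (\<Lambda> * dot N e e - lap_form N W e) * t\<^sup>2"
      unfolding b_def using x
      by (simp add: lap_add lap_scale dot_linear lap_self_adjoint[OF W, of x e] dot_commute[of N e x]
          power2_eq_square algebra_simps)
  qed (use max in simp)
  hence "b = 0" by simp
  thus ?thesis unfolding b_def e_dot dot_commute[of N x e] by simp
qed

lemma exists_largest_lap_eigenvalue:
  assumes "N \<ge> 1" and W: "symmetric_weights N W" "nonneg_weights N W" and diag: "\<forall>i<N. W i i = 0"
  shows "\<exists>\<Lambda>\<ge>0. lap_eigenvalue N W \<Lambda> \<and> (\<forall>y. lap_form N W y \<le> \<Lambda> * dot N y y)"
proof -
  have "(\<Sum>i<N. (if i = 0 then 1 else 0 :: real)\<^sup>2) = (\<Sum>i<N. if i = 0 then 1 else 0)"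
    by (intro sum.cong) auto
  hence "(\<lambda>i. if i = 0 then 1 else 0) \<in> unit_sphere N"
    using \<open>N \<ge> 1\<close> by (simp add: unit_sphere_def)
  then obtain x where x: "x \<in> unit_sphere N" and x_max: "\<forall>y\<in>unit_sphere N. lap_form N W y \<le> lap_form N W x"
    using continuous_attains_sup[OF compact_unit_sphere _ continuous_on_subset[OF continuous_on_lap_form]]
    by blast
  define \<Lambda> where "\<Lambda> = lap_form N W x"
  have x1: "dot N x x = 1" using x unfolding unit_sphere_def dot_def by (simp add: power2_eq_square)
  have max: "lap_form N W y \<le> \<Lambda> * dot N y y" for y
    using homogeneous_bound_of_unit_sphere[of "\<lambda>y. - lap_form N W y" N "\<lambda>_. True" "- \<Lambda>" y]
      x_max lap_form_homogeneous lap_form_cong unfolding \<Lambda>_def by fastforce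
  have "lap_eigenvalue N W \<Lambda>"
    unfolding lap_eigenvalue_def
  proof (intro exI[of _ x] conjI allI impI)
    show "\<exists>i<N. x i \<noteq> 0" using x1 unfolding dot_def by (metis (no_types) mult_zero_left lessThan_iff sum.neutral zero_neq_one)
    show "(\<Sum>j<N. laplacian N W i j * x j) = \<Lambda> * x i" if "i < N" for i
      using laplacian_mult_eq_lap[OF that] diag that lap_eigenvector_of_max[OF W(1) max x1 _ that]
      unfolding \<Lambda>_def by simp
  qed
  moreover have "0 \<le> \<Lambda>" unfolding \<Lambda>_def by (rule lap_form_nonneg[OF W])
  ultimately show ?thesis using max by blast
qed

lemma lap_form_eq_0_imp_constant:
  assumes W: "symmetric_weights N W" "nonneg_weights N W" and conn: "graph_connected N W"
    and zero: "lap_form N W x = 0" and "i < N" "j < N"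
  shows "x i = x j"
proof -
  have terms_nonneg: "\<forall>a\<in>{..<N}. \<forall>b\<in>{..<N}. 0 \<le> W a b * (x a - x b)\<^sup>2"
    using W(2) unfolding nonneg_weights_def by auto
  have "(\<Sum>a<N. \<Sum>b<N. W a b * (x a - x b)\<^sup>2) = 0"
    using zero unfolding lap_form_eq[OF W(1)] by simp
  hence "\<forall>a\<in>{..<N}. (\<Sum>b<N. W a b * (x a - x b)\<^sup>2) = 0"
    using terms_nonneg by (subst (asm) sum_nonneg_eq_0_iff) (auto intro: sum_nonneg)
  hence "W a b * (x a - x b)\<^sup>2 = 0" if "a < N" "b < N" for a b
    using terms_nonneg that sum_nonneg_eq_0_iff[of "{..<N}" "\<lambda>b. W a b * (x a - x b)\<^sup>2"] by auto
  hence edge: "x a = x b" if "a < N" "b < N" "W a b > 0" for a b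
    using that by fastforce
  have "(\<lambda>a b. a < N \<and> b < N \<and> W a b > 0)\<^sup>*\<^sup>* i j"
    using conn \<open>i < N\<close> \<open>j < N\<close> unfolding graph_connected_def by blast
  thus ?thesis by (induction rule: rtranclp_induct) (auto dest: edge)
qed

lemma connected_lap_form_coercive:
  assumes "N \<ge> 2" and W: "symmetric_weights N W" "nonneg_weights N W" and conn: "graph_connected N W"
  shows "\<exists>c>0. \<forall>y. (\<Sum>i<N. y i) = 0 \<longrightarrow> c * dot N y y \<le> lap_form N W y"
proof -
  define Z where "Z = {x::nat\<Rightarrow>real. (\<Sum>i<N. x i) = 0}"
  have "closed Z" unfolding Z_def
    by (intro closed_Collect_eq continuous_on_sum continuous_on_product_coordinates continuous_on_const)
  hence compact: "compact (unit_sphere N \<inter> Z)" by (rule compact_Int_closed[OF compact_unit_sphere])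
  define z where "z = (\<lambda>i::nat. if i = 0 then 1 / sqrt 2 else if i = 1 then - (1 / sqrt 2) else (0::real))"
  have "(\<Sum>i<N. f i) = f 0 + f 1" if "\<And>i. i \<ge> 2 \<Longrightarrow> f i = (0::real)" for f
    using that \<open>N \<ge> 2\<close> sum.mono_neutral_right[of "{..<N}" "{0, 1}" f] by auto
  hence "z \<in> unit_sphere N \<inter> Z"
    unfolding unit_sphere_def Z_def using \<open>N \<ge> 2\<close> by (auto simp: z_def power_divide)
  then obtain x where x: "x \<in> unit_sphere N \<inter> Z"
    and x_min: "\<forall>y\<in>unit_sphere N \<inter> Z. lap_form N W x \<le> lap_form N W y"
    using continuous_attains_inf[OF compact _ continuous_on_subset[OF continuous_on_lap_form]] by blast
  define c where "c = lap_form N W x"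
  have "c > 0"
  proof (rule ccontr)
    assume "\<not> c > 0"
    hence "lap_form N W x = 0" using lap_form_nonneg[OF W] unfolding c_def by (metis order.antisym not_less)
    hence const: "x i = x 0" if "i < N" for i
      using lap_form_eq_0_imp_constant[OF W conn _ that, where j = 0] \<open>N \<ge> 2\<close> by simp
    have "(\<Sum>i<N. x i) = (\<Sum>i<N. x 0)" by (rule sum.cong) (auto intro: const)
    hence "x 0 = 0" using x \<open>N \<ge> 2\<close> unfolding Z_def by simp
    hence "x i = 0" if "i < N" for i using const[OF that] by simp
    hence "(\<Sum>i<N. (x i)\<^sup>2) = (\<Sum>i<N. 0)" by (intro sum.cong) auto
    thus False using x unfolding unit_sphere_def by simp
  qed
  moreover have "c * dot N y y \<le> lap_form N W y" if "(\<Sum>i<N. y i) = 0" for y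
  proof (rule homogeneous_bound_of_unit_sphere[where P = "\<lambda>x. x \<in> Z"])
    show "(\<lambda>i. if i < N then a * x i else 0) \<in> Z" if "x \<in> Z" for a x
      using that unfolding Z_def by (simp add: sum_distrib_left[symmetric])
    show "c \<le> lap_form N W x" if "x \<in> unit_sphere N" "x \<in> Z" for x
      using x_min that unfolding c_def by blast
  qed (auto intro: lap_form_homogeneous lap_form_cong simp: Z_def that)
  ultimately show ?thesis by blast
qed

section \<open>A Lyapunov function for the closed loop\<close>

definition spectral_bounds :: "nat \<Rightarrow> real \<Rightarrow> real \<Rightarrow> (nat \<Rightarrow> nat \<Rightarrow> real) \<Rightarrow> bool" where
  "spectral_bounds N c \<Lambda> W \<longleftrightarrow> symmetric_weights N W \<and> nonneg_weights N W \<and>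
     (\<forall>y. lap_form N W y \<le> \<Lambda> * dot N y y) \<and>
     (\<forall>y. (\<Sum>i<N. y i) = 0 \<longrightarrow> c * dot N y y \<le> lap_form N W y)"

lemma spectral_boundsD:
  assumes "spectral_bounds N c \<Lambda> W"
  shows "symmetric_weights N W" "nonneg_weights N W" "lap_form N W y \<le> \<Lambda> * dot N y y"
    and "(\<Sum>i<N. y i) = 0 \<Longrightarrow> c * dot N y y \<le> lap_form N W y"
  using assms unfolding spectral_bounds_def by auto

lemma lap_norm_le_square:
  assumes W: "spectral_bounds N c \<Lambda> W" and "0 \<le> \<Lambda>"
  shows "dot N (lap N W x) (lap N W x) \<le> \<Lambda>\<^sup>2 * dot N x x"
proof -
  have "dot N (lap N W x) (lap N W x) \<le> \<Lambda> * lap_form N W x"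
    using lap_norm_le[OF spectral_boundsD(1,2)[OF W] spectral_boundsD(3)[OF W] \<open>0 \<le> \<Lambda>\<close>] .
  also have "\<dots> \<le> \<Lambda> * (\<Lambda> * dot N x x)"
    using spectral_boundsD(3)[OF W] \<open>0 \<le> \<Lambda>\<close> by (rule mult_left_mono)
  finally show ?thesis by (simp add: power2_eq_square mult.assoc)
qed

definition vel_step :: "nat \<Rightarrow> (nat \<Rightarrow> nat \<Rightarrow> real) \<Rightarrow> real \<Rightarrow> real \<Rightarrow> (nat \<Rightarrow> real) \<Rightarrow> (nat \<Rightarrow> real) \<Rightarrow> nat \<Rightarrow> real" where
  "vel_step N W \<gamma>1 \<gamma>2 p v = (\<lambda>i. v i - (\<gamma>1 * lap N W p i + \<gamma>2 * lap N W v i))"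

definition lyapunov :: "nat \<Rightarrow> (nat \<Rightarrow> nat \<Rightarrow> real) \<Rightarrow> real \<Rightarrow> real \<Rightarrow> real \<Rightarrow> (nat \<Rightarrow> real) \<Rightarrow> (nat \<Rightarrow> real) \<Rightarrow> real" where
  "lyapunov N W \<gamma>1 \<kappa> \<sigma> p v = \<gamma>1 * lap_form N W p + \<kappa> * dot N (lap N W p) (lap N W p)
      + 2 * \<sigma> * dot N (lap N W p) v + dot N v v"

lemma vel_step_sum_zero:
  assumes "symmetric_weights N W" "(\<Sum>i<N. v i) = 0"
  shows "(\<Sum>i<N. vel_step N W \<gamma>1 \<gamma>2 p v i) = 0"
  using assms lap_sum_zero[OF assms(1), of p] lap_sum_zero[OF assms(1), of v]
  by (simp add: vel_step_def sum_subtractf sum.distrib sum_distrib_left[symmetric])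

text \<open>The constant \<open>\<kappa>\<close> is chosen so that the cross terms \<open>p\<^sup>T L v\<close> cancel in the increment.\<close>
lemma lyapunov_step_eq:
  assumes W: "symmetric_weights N W" and \<kappa>: "\<kappa> = \<sigma> * (\<gamma>1 + \<gamma>2) - \<gamma>1 * \<gamma>2"
  shows "lyapunov N W \<gamma>1 \<kappa> \<sigma> (\<lambda>i. p i + v i) (vel_step N W \<gamma>1 \<gamma>2 p v) - lyapunov N W \<gamma>1 \<kappa> \<sigma> p v =
         - \<gamma>1 * (2 * \<sigma> - \<gamma>1) * dot N (lap N W p) (lap N W p)
         + (2 * \<sigma> - (2 * \<gamma>2 - \<gamma>1)) * lap_form N W v
         + (\<gamma>2 - \<sigma>) * (\<gamma>2 - \<gamma>1) * dot N (lap N W v) (lap N W v)"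
proof -
  define X where "X = lap N W p"
  define Y where "Y = lap N W v"
  have "dot N p Y = dot N v X" unfolding X_def Y_def by (rule lap_self_adjoint[OF W])
  thus ?thesis
    unfolding lyapunov_def vel_step_def lap_add X_def[symmetric] Y_def[symmetric] \<kappa>
    by (simp add: dot_linear dot_commute[of N X v] dot_commute[of N Y v] dot_commute[of N Y X]
        algebra_simps)
qed

lemma dot_self_le_double: "dot N x x \<le> 2 * dot N (\<lambda>i. x i + y i) (\<lambda>i. x i + y i) + 2 * dot N y y"
proof -
  have "0 \<le> dot N (\<lambda>i. x i + 2 * y i) (\<lambda>i. x i + 2 * y i)" by (rule dot_self_nonneg)
  thus ?thesis
    by (simp only: dot_add_left dot_add_right dot_scale_left dot_scale_right dot_commute[of N x y])
      (simp add: algebra_simps)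
qed

lemma lyapunov_completed_square:
  "lyapunov N W \<gamma>1 \<kappa> \<sigma> p v = dot N (\<lambda>i. v i + \<sigma> * lap N W p i) (\<lambda>i. v i + \<sigma> * lap N W p i)
     + \<gamma>1 * lap_form N W p + (\<kappa> - \<sigma>\<^sup>2) * dot N (lap N W p) (lap N W p)"
  unfolding lyapunov_def
  by (simp add: dot_linear dot_commute[of N v "lap N W p"] power2_eq_square algebra_simps)

lemma dot_abs_le_of_small:
  assumes "dot N w w \<le> d\<^sup>2 * P" "0 < d" "0 \<le> P"
  shows "\<bar>dot N u w\<bar> \<le> d * (dot N u u + P)"
proof -
  have "dot N w w / d \<le> d * P" using assms by (simp add: field_simps power2_eq_square)
  moreover have "0 \<le> d * (dot N u u + P)" using assms dot_self_nonneg[of N u] by simp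
  ultimately show ?thesis using dot_young[OF assms(2), of N u w] by (simp add: algebra_simps)
qed

lemma lyapunov_weight_diff:
  assumes "D = lap N (\<lambda>i j. W' i j - W i j) p"
  shows "lyapunov N W' \<gamma>1 \<kappa> \<sigma> p v - lyapunov N W \<gamma>1 \<kappa> \<sigma> p v
    = \<gamma>1 * dot N p D + \<kappa> * (2 * dot N (lap N W p) D + dot N D D) + 2 * \<sigma> * dot N v D"
proof -
  have "lap N W' p = (\<lambda>i. lap N W p i + D i)" unfolding assms lap_diff_weights by simp
  thus ?thesis unfolding lyapunov_def
    by (simp add: dot_linear dot_commute[of N D "lap N W p"] dot_commute[of N D v] algebra_simps)
qed

lemma contraction_of_decrease_and_drift:
  fixes V V' V'' n K \<eta> e :: real
  assumes decrease: "V' - V \<le> - \<eta> * n" and upper: "V \<le> K * n" and "0 < K" "0 \<le> V"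
    and e: "0 < e" "e \<le> 1" "e * K \<le> \<eta>"
    and drift: "V'' - V' \<le> e / 2 * V'"
  shows "V'' \<le> (1 - e / 2) * V"
proof -
  have "0 \<le> n" using upper \<open>0 < K\<close> \<open>0 \<le> V\<close> by (smt (verit) mult_pos_neg)
  have "e * V \<le> e * K * n" using upper e by (simp add: mult.assoc mult_left_mono)
  also have "\<dots> \<le> \<eta> * n" using e(3) \<open>0 \<le> n\<close> by (rule mult_right_mono)
  finally have V'_le: "V' \<le> (1 - e) * V" using decrease by (simp add: algebra_simps)
  have "V'' \<le> (1 + e / 2) * V'" using drift by (simp add: algebra_simps)
  also have "\<dots> \<le> (1 + e / 2) * ((1 - e) * V)" using V'_le e by (intro mult_left_mono) auto
  also have "\<dots> \<le> (1 - e / 2) * V"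
  proof -
    have "(1 + e / 2) * (1 - e) \<le> 1 - e / 2" by (simp add: algebra_simps)
    thus ?thesis using \<open>0 \<le> V\<close> by (metis mult.assoc mult_right_mono)
  qed
  finally show ?thesis .
qed

context
  fixes N :: nat and c \<Lambda> \<gamma>1 \<gamma>2 \<sigma> \<kappa> :: real
  assumes \<gamma>1: "\<gamma>1 > 0" and \<Lambda>: "\<Lambda> > 0" and c: "c > 0"
    and \<kappa>: "\<kappa> = \<sigma> * (\<gamma>1 + \<gamma>2) - \<gamma>1 * \<gamma>2"
    and \<sigma>_low: "2 * \<sigma> > \<gamma>1"
    and \<sigma>_high: "2 * \<sigma> < 2 * \<gamma>2 - \<gamma>1"
    and \<sigma>_high_\<Lambda>: "2 * \<sigma> - (2 * \<gamma>2 - \<gamma>1) + \<Lambda> * ((\<gamma>2 - \<sigma>) * (\<gamma>2 - \<gamma>1)) < 0"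
    and \<kappa>_\<Lambda>: "\<gamma>1 + (\<kappa> - \<sigma>\<^sup>2) * \<Lambda> > 0"
begin

lemma \<sigma>_pos: "\<sigma> > 0"
  using \<gamma>1 \<sigma>_low by simp

lemma lyapunov_step_decrease:
  "\<exists>\<eta>>0. \<forall>W p v. spectral_bounds N c \<Lambda> W \<longrightarrow> (\<Sum>i<N. p i) = 0 \<longrightarrow> (\<Sum>i<N. v i) = 0 \<longrightarrow>
     lyapunov N W \<gamma>1 \<kappa> \<sigma> (\<lambda>i. p i + v i) (vel_step N W \<gamma>1 \<gamma>2 p v) - lyapunov N W \<gamma>1 \<kappa> \<sigma> p v
       \<le> - \<eta> * (dot N p p + dot N v v)"
proof -
  define a where "a = 2 * \<sigma> - (2 * \<gamma>2 - \<gamma>1)"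
  define b where "b = (\<gamma>2 - \<sigma>) * (\<gamma>2 - \<gamma>1)"
  define m where "m = max a (a + \<Lambda> * b)"
  define \<eta> where "\<eta> = min (\<gamma>1 * (2 * \<sigma> - \<gamma>1) * c\<^sup>2) (- m * c)"
  have "m < 0" using \<sigma>_high \<sigma>_high_\<Lambda> unfolding m_def a_def b_def by simp
  hence "\<eta> > 0" unfolding \<eta>_def using \<gamma>1 \<sigma>_low c by (simp add: mult_neg_pos)
  moreover have "lyapunov N W \<gamma>1 \<kappa> \<sigma> (\<lambda>i. p i + v i) (vel_step N W \<gamma>1 \<gamma>2 p v) - lyapunov N W \<gamma>1 \<kappa> \<sigma> p v
       \<le> - \<eta> * (dot N p p + dot N v v)"
    if W: "spectral_bounds N c \<Lambda> W" and p: "(\<Sum>i<N. p i) = 0" and v: "(\<Sum>i<N. v i) = 0" for W p v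
  proof -
    define XX where "XX = dot N (lap N W p) (lap N W p)"
    define YY where "YY = dot N (lap N W v) (lap N W v)"
    define C where "C = lap_form N W v"
    have C_low: "c * dot N v v \<le> C" unfolding C_def by (rule spectral_boundsD(4)[OF W v])
    have C_nonneg: "0 \<le> C" unfolding C_def by (rule lap_form_nonneg[OF spectral_boundsD(1,2)[OF W]])
    have YY_le: "YY \<le> \<Lambda> * C"
      unfolding YY_def C_def using \<Lambda> spectral_boundsD[OF W] by (intro lap_norm_le) auto
    have p_term: "\<gamma>1 * (2 * \<sigma> - \<gamma>1) * c\<^sup>2 * dot N p p \<le> \<gamma>1 * (2 * \<sigma> - \<gamma>1) * XX"
    proof -
      have "c\<^sup>2 * dot N p p \<le> XX"
        unfolding XX_def using c by (intro lap_norm_ge spectral_boundsD(4)[OF W p]) auto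
      thus ?thesis using \<gamma>1 \<sigma>_low by (simp add: mult.assoc)
    qed
    have v_term: "a * C + b * YY \<le> m * C"
    proof (cases "b \<le> 0")
      case True
      hence "b * YY \<le> 0" unfolding YY_def by (simp add: mult_nonpos_nonneg dot_self_nonneg)
      moreover have "a * C \<le> m * C" using C_nonneg unfolding m_def by (intro mult_right_mono) auto
      ultimately show ?thesis by simp
    next
      case False
      have "b * YY \<le> b * (\<Lambda> * C)" using False YY_le by (intro mult_left_mono) auto
      moreover have "(a + \<Lambda> * b) * C \<le> m * C" using C_nonneg unfolding m_def by (intro mult_right_mono) auto
      ultimately show ?thesis by (simp add: algebra_simps)
    qed
    have "m * C \<le> m * c * dot N v v"
      using C_low \<open>m < 0\<close> by (simp add: mult_left_mono_neg mult.assoc)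
    moreover have "\<eta> * dot N p p \<le> \<gamma>1 * (2 * \<sigma> - \<gamma>1) * c\<^sup>2 * dot N p p"
      and "\<eta> * dot N v v \<le> - m * c * dot N v v"
      unfolding \<eta>_def by (intro mult_right_mono dot_self_nonneg; simp)+
    ultimately show ?thesis
      using lyapunov_step_eq[OF spectral_boundsD(1)[OF W] \<kappa>, of p v] p_term v_term
      unfolding XX_def YY_def C_def a_def b_def by (simp add: algebra_simps)
  qed
  ultimately show ?thesis by blast
qed

lemma lyapunov_upper:
  "\<exists>K>0. \<forall>W p v. spectral_bounds N c \<Lambda> W \<longrightarrow> lyapunov N W \<gamma>1 \<kappa> \<sigma> p v \<le> K * (dot N p p + dot N v v)"
proof -
  define K where "K = \<gamma>1 * \<Lambda> + \<bar>\<kappa>\<bar> * \<Lambda>\<^sup>2 + \<sigma> * \<Lambda>\<^sup>2 + \<sigma> + 1"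
  have "K > 0" unfolding K_def using \<gamma>1 \<Lambda> \<sigma>_pos by (auto intro!: add_pos_nonneg add_nonneg_nonneg)
  moreover have "lyapunov N W \<gamma>1 \<kappa> \<sigma> p v \<le> K * (dot N p p + dot N v v)"
    if W: "spectral_bounds N c \<Lambda> W" for W p v
  proof -
    define X where "X = lap N W p"
    have XX: "dot N X X \<le> \<Lambda>\<^sup>2 * dot N p p"
      unfolding X_def using \<Lambda> by (intro lap_norm_le_square[OF W]) simp
    have "\<gamma>1 * lap_form N W p \<le> \<gamma>1 * (\<Lambda> * dot N p p)"
      using \<gamma>1 spectral_boundsD(3)[OF W] by (intro mult_left_mono) auto
    moreover have "\<kappa> * dot N X X \<le> \<bar>\<kappa>\<bar> * (\<Lambda>\<^sup>2 * dot N p p)"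
      using XX dot_self_nonneg[of N X] by (smt (verit) abs_ge_self abs_ge_zero mult_mono)
    moreover have "2 * \<sigma> * dot N X v \<le> \<sigma> * (\<Lambda>\<^sup>2 * dot N p p + dot N v v)"
    proof -
      have "2 * dot N X v \<le> dot N X X + dot N v v"
        using dot_young[of 1 N X v] by (simp add: abs_le_iff)
      hence "2 * dot N X v \<le> \<Lambda>\<^sup>2 * dot N p p + dot N v v" using XX by linarith
      hence "\<sigma> * (2 * dot N X v) \<le> \<sigma> * (\<Lambda>\<^sup>2 * dot N p p + dot N v v)"
        using \<sigma>_pos by (intro mult_left_mono) auto
      thus ?thesis by (simp add: mult_ac)
    qed
    ultimately have "lyapunov N W \<gamma>1 \<kappa> \<sigma> p v
        \<le> (\<gamma>1 * \<Lambda> + \<bar>\<kappa>\<bar> * \<Lambda>\<^sup>2 + \<sigma> * \<Lambda>\<^sup>2) * dot N p p + (\<sigma> + 1) * dot N v v"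
      unfolding lyapunov_def X_def by (simp add: algebra_simps)
    also have "\<dots> \<le> K * (dot N p p + dot N v v)"
      unfolding K_def using \<gamma>1 \<Lambda> \<sigma>_pos dot_self_nonneg[of N p] dot_self_nonneg[of N v]
      by (simp add: algebra_simps)
    finally show ?thesis .
  qed
  ultimately show ?thesis by blast
qed

lemma lyapunov_position_part_lower:
  assumes W: "spectral_bounds N c \<Lambda> W" and p: "(\<Sum>i<N. p i) = 0"
  shows "min \<gamma>1 (\<gamma>1 + (\<kappa> - \<sigma>\<^sup>2) * \<Lambda>) * c * dot N p p
    \<le> \<gamma>1 * lap_form N W p + (\<kappa> - \<sigma>\<^sup>2) * dot N (lap N W p) (lap N W p)"
proof -
  have q_low: "c * dot N p p \<le> lap_form N W p" by (rule spectral_boundsD(4)[OF W p])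
  hence q_nonneg: "0 \<le> lap_form N W p" using c dot_self_nonneg[of N p] by (smt (verit) mult_nonneg_nonneg)
  have "min \<gamma>1 (\<gamma>1 + (\<kappa> - \<sigma>\<^sup>2) * \<Lambda>) * lap_form N W p
      \<le> \<gamma>1 * lap_form N W p + (\<kappa> - \<sigma>\<^sup>2) * dot N (lap N W p) (lap N W p)"
  proof (cases "\<kappa> - \<sigma>\<^sup>2 \<ge> 0")
    case True
    thus ?thesis using q_nonneg dot_self_nonneg[of N "lap N W p"]
      by (smt (verit) min.cobounded1 mult_nonneg_nonneg mult_right_mono)
  next
    case False
    have "dot N (lap N W p) (lap N W p) \<le> \<Lambda> * lap_form N W p"
      using \<Lambda> spectral_boundsD[OF W] by (intro lap_norm_le) auto
    hence "(\<kappa> - \<sigma>\<^sup>2) * (\<Lambda> * lap_form N W p) \<le> (\<kappa> - \<sigma>\<^sup>2) * dot N (lap N W p) (lap N W p)"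
      using False by (intro mult_left_mono_neg) auto
    thus ?thesis using q_nonneg by (smt (verit) min.cobounded2 mult_right_mono distrib_right mult.assoc)
  qed
  moreover have "min \<gamma>1 (\<gamma>1 + (\<kappa> - \<sigma>\<^sup>2) * \<Lambda>) * c * dot N p p \<le> min \<gamma>1 (\<gamma>1 + (\<kappa> - \<sigma>\<^sup>2) * \<Lambda>) * lap_form N W p"
    using q_low \<gamma>1 \<kappa>_\<Lambda> by (simp add: mult.assoc mult_left_mono)
  ultimately show ?thesis by linarith
qed

lemma lyapunov_lower:
  "\<exists>\<epsilon>>0. \<forall>W p v. spectral_bounds N c \<Lambda> W \<longrightarrow> (\<Sum>i<N. p i) = 0 \<longrightarrow>
     \<epsilon> * (dot N p p + dot N v v) \<le> lyapunov N W \<gamma>1 \<kappa> \<sigma> p v"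
proof -
  define k where "k = min \<gamma>1 (\<gamma>1 + (\<kappa> - \<sigma>\<^sup>2) * \<Lambda>) * c"
  define \<mu> where "\<mu> = \<sigma>\<^sup>2 * \<Lambda>\<^sup>2"
  define \<theta> where "\<theta> = k / (2 * (\<mu> + k))"
  have k: "k > 0" unfolding k_def using \<gamma>1 \<kappa>_\<Lambda> c by simp
  have "\<mu> \<ge> 0" unfolding \<mu>_def by simp
  hence \<theta>: "0 < \<theta>" "\<theta> \<le> 1" "\<theta> * \<mu> \<le> k / 2"
    unfolding \<theta>_def using k by (auto simp: field_simps)
  define \<epsilon> where "\<epsilon> = min (\<theta> / 2) (k / 2)"
  have "\<epsilon> > 0" unfolding \<epsilon>_def using k \<theta> by simp
  moreover have "\<epsilon> * (dot N p p + dot N v v) \<le> lyapunov N W \<gamma>1 \<kappa> \<sigma> p v"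
    if W: "spectral_bounds N c \<Lambda> W" and p: "(\<Sum>i<N. p i) = 0" for W p v
  proof -
    define X where "X = lap N W p"
    define U where "U = dot N (\<lambda>i. v i + \<sigma> * X i) (\<lambda>i. v i + \<sigma> * X i)"
    have "dot N v v \<le> 2 * U + 2 * (\<sigma>\<^sup>2 * dot N X X)"
      using dot_self_le_double[of N v "\<lambda>i. \<sigma> * X i"] unfolding U_def
      by (simp only: dot_scale_left dot_scale_right) (simp add: power2_eq_square)
    moreover have "\<sigma>\<^sup>2 * dot N X X \<le> \<mu> * dot N p p"
      unfolding X_def \<mu>_def using \<Lambda> by (simp add: mult.assoc mult_left_mono lap_norm_le_square[OF W])
    ultimately have "dot N v v \<le> 2 * U + 2 * (\<mu> * dot N p p)" by linarith
    hence "\<theta> / 2 * dot N v v \<le> \<theta> * U + \<theta> * \<mu> * dot N p p"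
      using mult_left_mono[of _ _ "\<theta> / 2"] \<theta> by (fastforce simp: algebra_simps)
    also have "\<dots> \<le> U + k / 2 * dot N p p"
      using \<theta> dot_self_nonneg[of N p] dot_self_nonneg unfolding U_def
      by (intro add_mono mult_right_mono) (auto intro: mult_left_le_one_le)
    finally have "\<theta> / 2 * dot N v v + k / 2 * dot N p p \<le> lyapunov N W \<gamma>1 \<kappa> \<sigma> p v"
      using lyapunov_completed_square[of N W \<gamma>1 \<kappa> \<sigma> p v] lyapunov_position_part_lower[OF W p]
      unfolding U_def X_def k_def[symmetric] by linarith
    moreover have "\<epsilon> * dot N p p \<le> k / 2 * dot N p p" "\<epsilon> * dot N v v \<le> \<theta> / 2 * dot N v v"
      unfolding \<epsilon>_def by (intro mult_right_mono dot_self_nonneg; simp)+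
    ultimately show ?thesis by (simp add: algebra_simps)
  qed
  ultimately show ?thesis by blast
qed

lemma lyapunov_weight_drift:
  "\<exists>K>0. \<forall>W W' d p v. spectral_bounds N c \<Lambda> W \<longrightarrow> (\<forall>i<N. \<forall>j<N. \<bar>W' i j - W i j\<bar> \<le> d) \<longrightarrow>
     0 < d \<longrightarrow> d \<le> 1 \<longrightarrow>
     lyapunov N W' \<gamma>1 \<kappa> \<sigma> p v - lyapunov N W \<gamma>1 \<kappa> \<sigma> p v \<le> d * K * (dot N p p + dot N v v)"
proof -
  define K where "K = \<gamma>1 * (1 + 4 * (real N)\<^sup>2) + \<bar>\<kappa>\<bar> * (2 * \<Lambda>\<^sup>2 + 12 * (real N)\<^sup>2) + 2 * \<sigma> * (1 + 4 * (real N)\<^sup>2)"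
  have "K > 0" unfolding K_def using \<gamma>1 \<sigma>_pos by (intro add_pos_nonneg mult_pos_pos) (auto intro: add_pos_nonneg)
  moreover have "lyapunov N W' \<gamma>1 \<kappa> \<sigma> p v - lyapunov N W \<gamma>1 \<kappa> \<sigma> p v \<le> d * K * (dot N p p + dot N v v)"
    if W: "spectral_bounds N c \<Lambda> W" and close: "\<forall>i<N. \<forall>j<N. \<bar>W' i j - W i j\<bar> \<le> d"
      and d: "0 < d" "d \<le> 1" for W W' d p v
  proof -
    define X where "X = lap N W p"
    define D where "D = lap N (\<lambda>i j. W' i j - W i j) p"
    define P where "P = 4 * (real N)\<^sup>2 * dot N p p"
    have "0 \<le> P" unfolding P_def by (simp add: dot_self_nonneg)
    have XX: "dot N X X \<le> \<Lambda>\<^sup>2 * dot N p p"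
      unfolding X_def using \<Lambda> by (intro lap_norm_le_square[OF W]) simp
    have DD: "dot N D D \<le> d\<^sup>2 * P"
      unfolding D_def P_def using lap_norm_weight_bound[of N "\<lambda>i j. W' i j - W i j" d p] close
      by (simp add: mult_ac)
    have "d\<^sup>2 * P \<le> d * P" using d \<open>0 \<le> P\<close>
      by (intro mult_right_mono) (auto simp: power2_eq_square mult_le_cancel_left1)
    hence DD': "dot N D D \<le> d * P" using DD by linarith
    note cross = dot_abs_le_of_small[OF DD d(1) \<open>0 \<le> P\<close>]
    have "lyapunov N W' \<gamma>1 \<kappa> \<sigma> p v - lyapunov N W \<gamma>1 \<kappa> \<sigma> p v
        = \<gamma>1 * dot N p D + \<kappa> * (2 * dot N X D + dot N D D) + 2 * \<sigma> * dot N v D"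
      unfolding X_def by (rule lyapunov_weight_diff[OF D_def])
    also have "\<dots> \<le> \<gamma>1 * (d * (dot N p p + P)) + \<bar>\<kappa>\<bar> * (2 * (d * (dot N X X + P)) + d * P)
        + 2 * \<sigma> * (d * (dot N v v + P))"
    proof (intro add_mono)
      show "\<gamma>1 * dot N p D \<le> \<gamma>1 * (d * (dot N p p + P))"
        using cross[of p] \<gamma>1 by (intro mult_left_mono) auto
      show "2 * \<sigma> * dot N v D \<le> 2 * \<sigma> * (d * (dot N v v + P))"
        using cross[of v] \<sigma>_pos by (intro mult_left_mono) auto
      have "\<kappa> * (2 * dot N X D + dot N D D) \<le> \<bar>\<kappa>\<bar> * \<bar>2 * dot N X D + dot N D D\<bar>"
        by (metis abs_ge_self abs_mult)
      also have "\<dots> \<le> \<bar>\<kappa>\<bar> * (2 * (d * (dot N X X + P)) + d * P)"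
        using cross[of X] DD' dot_self_nonneg[of N D] by (intro mult_left_mono) auto
      finally show "\<kappa> * (2 * dot N X D + dot N D D) \<le> \<bar>\<kappa>\<bar> * (2 * (d * (dot N X X + P)) + d * P)" .
    qed
    also have "\<dots> \<le> d * (\<gamma>1 * (dot N p p + P) + \<bar>\<kappa>\<bar> * (2 * \<Lambda>\<^sup>2 * dot N p p + 3 * P)
        + 2 * \<sigma> * (dot N v v + P))"
      using mult_left_mono[OF XX, of "2 * d * \<bar>\<kappa>\<bar>"] d by (simp add: algebra_simps)
    also have "\<dots> \<le> d * K * (dot N p p + dot N v v)"
    proof -
      have "\<gamma>1 * (dot N p p + P) + \<bar>\<kappa>\<bar> * (2 * \<Lambda>\<^sup>2 * dot N p p + 3 * P) + 2 * \<sigma> * (dot N v v + P)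
          = (K - 2 * \<sigma>) * dot N p p + 2 * \<sigma> * dot N v v"
        unfolding K_def P_def by (simp add: algebra_simps)
      also have "\<dots> \<le> K * (dot N p p + dot N v v)"
      proof -
        have "2 * \<sigma> \<le> K" unfolding K_def using \<gamma>1 \<sigma>_pos by (simp add: algebra_simps)
        thus ?thesis using \<sigma>_pos dot_self_nonneg[of N p] dot_self_nonneg[of N v]
          by (smt (verit) mult_nonneg_nonneg distrib_left left_diff_distrib)
      qed
      finally show ?thesis using d by (simp add: mult.assoc mult_left_mono)
    qed
    finally show ?thesis .
  qed
  ultimately show ?thesis by blast
qed

lemma lyapunov_contraction:
  "\<exists>\<rho> d \<epsilon>. 0 < d \<and> 0 \<le> \<rho> \<and> \<rho> < 1 \<and> 0 < \<epsilon> \<and>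
    (\<forall>W W' p v. spectral_bounds N c \<Lambda> W \<longrightarrow> (\<forall>i<N. \<forall>j<N. \<bar>W' i j - W i j\<bar> \<le> d) \<longrightarrow>
       (\<Sum>i<N. p i) = 0 \<longrightarrow> (\<Sum>i<N. v i) = 0 \<longrightarrow>
       lyapunov N W' \<gamma>1 \<kappa> \<sigma> (\<lambda>i. p i + v i) (vel_step N W \<gamma>1 \<gamma>2 p v) \<le> \<rho> * lyapunov N W \<gamma>1 \<kappa> \<sigma> p v) \<and>
    (\<forall>W p v. spectral_bounds N c \<Lambda> W \<longrightarrow> (\<Sum>i<N. p i) = 0 \<longrightarrow>
       \<epsilon> * (dot N p p + dot N v v) \<le> lyapunov N W \<gamma>1 \<kappa> \<sigma> p v)"
proof -
  obtain \<eta> where \<eta>: "\<eta> > 0" and decrease: "\<forall>W p v. spectral_bounds N c \<Lambda> W \<longrightarrow> (\<Sum>i<N. p i) = 0 \<longrightarrow>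
      (\<Sum>i<N. v i) = 0 \<longrightarrow> lyapunov N W \<gamma>1 \<kappa> \<sigma> (\<lambda>i. p i + v i) (vel_step N W \<gamma>1 \<gamma>2 p v)
        - lyapunov N W \<gamma>1 \<kappa> \<sigma> p v \<le> - \<eta> * (dot N p p + dot N v v)"
    using lyapunov_step_decrease by blast
  obtain K where K: "K > 0"
    and upper: "\<forall>W p v. spectral_bounds N c \<Lambda> W \<longrightarrow> lyapunov N W \<gamma>1 \<kappa> \<sigma> p v \<le> K * (dot N p p + dot N v v)"
    using lyapunov_upper by blast
  obtain \<epsilon> where \<epsilon>: "\<epsilon> > 0" and lower: "\<forall>W p v. spectral_bounds N c \<Lambda> W \<longrightarrow> (\<Sum>i<N. p i) = 0 \<longrightarrow>
      \<epsilon> * (dot N p p + dot N v v) \<le> lyapunov N W \<gamma>1 \<kappa> \<sigma> p v"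
    using lyapunov_lower by blast
  obtain K' where K': "K' > 0" and drift: "\<forall>W W' d p v. spectral_bounds N c \<Lambda> W \<longrightarrow>
      (\<forall>i<N. \<forall>j<N. \<bar>W' i j - W i j\<bar> \<le> d) \<longrightarrow> 0 < d \<longrightarrow> d \<le> 1 \<longrightarrow>
      lyapunov N W' \<gamma>1 \<kappa> \<sigma> p v - lyapunov N W \<gamma>1 \<kappa> \<sigma> p v \<le> d * K' * (dot N p p + dot N v v)"
    using lyapunov_weight_drift by blast
  define e where "e = min (\<eta> / K) 1"
  define d where "d = min 1 (\<epsilon> * e / (2 * K'))"
  have e: "0 < e" "e \<le> 1" unfolding e_def using \<eta> K by auto
  have d: "0 < d" "d \<le> 1" "d * K' \<le> \<epsilon> * e / 2"
    unfolding d_def using e \<epsilon> K' by (auto simp: min_def field_simps)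
  have "lyapunov N W' \<gamma>1 \<kappa> \<sigma> (\<lambda>i. p i + v i) (vel_step N W \<gamma>1 \<gamma>2 p v)
      \<le> (1 - e / 2) * lyapunov N W \<gamma>1 \<kappa> \<sigma> p v"
    if W: "spectral_bounds N c \<Lambda> W" and close: "\<forall>i<N. \<forall>j<N. \<bar>W' i j - W i j\<bar> \<le> d"
      and p: "(\<Sum>i<N. p i) = 0" and v: "(\<Sum>i<N. v i) = 0" for W W' p v
  proof -
    define p' where "p' = (\<lambda>i. p i + v i)"
    define v' where "v' = vel_step N W \<gamma>1 \<gamma>2 p v"
    define V where "V = lyapunov N W \<gamma>1 \<kappa> \<sigma> p v"
    define V1 where "V1 = lyapunov N W \<gamma>1 \<kappa> \<sigma> p' v'"
    define n where "n = dot N p p + dot N v v"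
    define n' where "n' = dot N p' p' + dot N v' v'"
    have p': "(\<Sum>i<N. p' i) = 0" unfolding p'_def using p v by (simp add: sum.distrib)
    have v': "(\<Sum>i<N. v' i) = 0" unfolding v'_def by (rule vel_step_sum_zero[OF spectral_boundsD(1)[OF W] v])
    have "0 \<le> n" "0 \<le> n'" unfolding n_def n'_def by (simp_all add: add_nonneg_nonneg dot_self_nonneg)
    have V_nonneg: "0 \<le> V" using lower W p \<epsilon> \<open>0 \<le> n\<close> unfolding V_def n_def
      by (meson mult_nonneg_nonneg less_imp_le order_trans)
    have "lyapunov N W' \<gamma>1 \<kappa> \<sigma> p' v' - V1 \<le> d * K' * n'"
      unfolding V1_def n'_def using drift W close d(1,2) by blast
    also have "\<dots> \<le> e / 2 * (\<epsilon> * n')"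
      using mult_right_mono[OF d(3) \<open>0 \<le> n'\<close>] by (simp add: mult_ac)
    also have "\<epsilon> * n' \<le> V1" using lower W p' unfolding V1_def n'_def by blast
    finally have drift_step: "lyapunov N W' \<gamma>1 \<kappa> \<sigma> p' v' - V1 \<le> e / 2 * V1" using e by simp
    have "V1 - V \<le> - \<eta> * n"
      using decrease W p v unfolding V1_def V_def n_def p'_def v'_def by blast
    moreover have "V \<le> K * n" using upper W unfolding V_def n_def by blast
    moreover have "e * K \<le> \<eta>" unfolding e_def using K by (simp add: min_def field_simps)
    ultimately have "lyapunov N W' \<gamma>1 \<kappa> \<sigma> p' v' \<le> (1 - e / 2) * V"
      using contraction_of_decrease_and_drift[OF _ _ K V_nonneg e _ drift_step] by blast
    thus ?thesis unfolding p'_def v'_def V_def .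
  qed
  moreover have "0 \<le> 1 - e / 2" "1 - e / 2 < 1" using e by auto
  ultimately show ?thesis using d(1) \<epsilon> lower by blast
qed

end

text \<open>Writing \<open>D = 2 - \<Lambda> (\<gamma>\<^sub>2 - \<gamma>\<^sub>1) > 0\<close>, the third condition reads \<open>\<sigma> < S\<close> with \<open>S D = 2\<gamma>\<^sub>2 - \<gamma>\<^sub>1 - \<Lambda> \<gamma>\<^sub>2 (\<gamma>\<^sub>2 - \<gamma>\<^sub>1)\<close>;
  the hypothesis \<open>\<Lambda> (2\<gamma>\<^sub>2 - \<gamma>\<^sub>1) < 4\<close> is exactly what makes \<open>\<gamma>\<^sub>1/2 < S\<close>, and the midpoint works.\<close>
lemma exists_lyapunov_gain:
  fixes \<gamma>1 \<gamma>2 \<Lambda> :: real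
  assumes \<gamma>: "0 < \<gamma>1" "\<gamma>1 < \<gamma>2" and \<Lambda>: "0 < \<Lambda>" "\<Lambda> * (2 * \<gamma>2 - \<gamma>1) < 4"
  shows "\<exists>\<sigma>. 2 * \<sigma> > \<gamma>1 \<and> 2 * \<sigma> < 2 * \<gamma>2 - \<gamma>1 \<and>
    2 * \<sigma> - (2 * \<gamma>2 - \<gamma>1) + \<Lambda> * ((\<gamma>2 - \<sigma>) * (\<gamma>2 - \<gamma>1)) < 0 \<and>
    \<gamma>1 + (\<sigma> * (\<gamma>1 + \<gamma>2) - \<gamma>1 * \<gamma>2 - \<sigma>\<^sup>2) * \<Lambda> > 0"
proof -
  define D where "D = 2 - \<Lambda> * (\<gamma>2 - \<gamma>1)"
  define S where "S = (2 * \<gamma>2 - \<gamma>1 - \<Lambda> * \<gamma>2 * (\<gamma>2 - \<gamma>1)) / D"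
  define \<sigma> where "\<sigma> = (\<gamma>1 / 2 + S) / 2"
  have "\<Lambda> * (\<gamma>2 - \<gamma>1) < \<Lambda> * (2 * \<gamma>2 - \<gamma>1) / 2" using \<gamma> \<Lambda> by (simp add: field_simps)
  hence D: "D > 0" unfolding D_def using \<Lambda> by linarith
  have SD: "S * D = 2 * \<gamma>2 - \<gamma>1 - \<Lambda> * \<gamma>2 * (\<gamma>2 - \<gamma>1)" unfolding S_def using D by simp
  have "(2 * S - \<gamma>1) * D = 2 * (S * D) - \<gamma>1 * D" by (simp add: algebra_simps)
  also have "\<dots> = (\<gamma>2 - \<gamma>1) * (4 - \<Lambda> * (2 * \<gamma>2 - \<gamma>1))"
    by (simp only: SD) (simp add: D_def algebra_simps)
  also have "\<dots> > 0" using \<gamma> \<Lambda> by simp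
  finally have "0 < 2 * S - \<gamma>1" by (rule zero_less_mult_pos2[OF _ D])
  hence S_low: "\<gamma>1 / 2 < S" by simp
  have "(2 * \<gamma>2 - \<gamma>1 - 2 * S) * D = (2 * \<gamma>2 - \<gamma>1) * D - 2 * (S * D)" by (simp add: algebra_simps)
  also have "\<dots> = \<Lambda> * (\<gamma>2 - \<gamma>1) * \<gamma>1" by (simp only: SD) (simp add: D_def algebra_simps)
  also have "\<dots> > 0" using \<gamma> \<Lambda> by simp
  finally have "0 < 2 * \<gamma>2 - \<gamma>1 - 2 * S" by (rule zero_less_mult_pos2[OF _ D])
  hence S_high: "S < (2 * \<gamma>2 - \<gamma>1) / 2" by simp
  have "(\<gamma>2 - S) * D = \<gamma>2 * D - S * D" by (simp add: algebra_simps)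
  also have "\<dots> = \<gamma>1" by (simp only: SD) (simp add: D_def algebra_simps)
  finally have "0 < (\<gamma>2 - S) * D" using \<gamma> by simp
  hence "0 < \<gamma>2 - S" by (rule zero_less_mult_pos2[OF _ D])
  hence "S < \<gamma>2" by simp
  have \<sigma>: "\<gamma>1 / 2 < \<sigma>" "\<sigma> < S" "\<sigma> < \<gamma>2" unfolding \<sigma>_def using S_low \<open>S < \<gamma>2\<close> by auto
  have "2 * \<sigma> - (2 * \<gamma>2 - \<gamma>1) + \<Lambda> * ((\<gamma>2 - \<sigma>) * (\<gamma>2 - \<gamma>1))
      = D * \<sigma> - (2 * \<gamma>2 - \<gamma>1 - \<Lambda> * \<gamma>2 * (\<gamma>2 - \<gamma>1))"
    by (simp add: D_def algebra_simps)
  also have "\<dots> = D * \<sigma> - S * D" by (simp only: SD)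
  also have "\<dots> = D * (\<sigma> - S)" by (simp add: algebra_simps)
  also have "\<dots> < 0" using D \<sigma> by (simp add: mult_pos_neg)
  finally have third: "2 * \<sigma> - (2 * \<gamma>2 - \<gamma>1) + \<Lambda> * ((\<gamma>2 - \<sigma>) * (\<gamma>2 - \<gamma>1)) < 0" .
  have "(\<sigma> * (\<gamma>1 + \<gamma>2) - \<gamma>1 * \<gamma>2 - \<sigma>\<^sup>2) * \<Lambda> = - \<Lambda> * ((\<sigma> - \<gamma>1) * (\<sigma> - \<gamma>2))"
    by (simp add: power2_eq_square algebra_simps)
  moreover have "\<Lambda> * ((\<sigma> - \<gamma>1) * (\<sigma> - \<gamma>2)) < \<gamma>1"
  proof (cases "\<sigma> \<ge> \<gamma>1")
    case True
    hence "(\<sigma> - \<gamma>1) * (\<sigma> - \<gamma>2) \<le> 0" using \<sigma> by (simp add: mult_nonneg_nonpos)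
    hence "\<Lambda> * ((\<sigma> - \<gamma>1) * (\<sigma> - \<gamma>2)) \<le> 0" using \<Lambda> by (simp add: mult_nonneg_nonpos)
    thus ?thesis using \<gamma> by linarith
  next
    case False
    have "(\<sigma> - \<gamma>1) * (\<sigma> - \<gamma>2) = (\<gamma>1 - \<sigma>) * (\<gamma>2 - \<sigma>)" by (simp add: algebra_simps)
    also have "\<dots> \<le> (\<gamma>1 / 2) * (\<gamma>2 - \<gamma>1 / 2)" using False \<sigma> by (intro mult_mono) auto
    finally have "\<Lambda> * ((\<sigma> - \<gamma>1) * (\<sigma> - \<gamma>2)) \<le> \<Lambda> * ((\<gamma>1 / 2) * (\<gamma>2 - \<gamma>1 / 2))"
      using \<Lambda> by (intro mult_left_mono) auto
    also have "\<dots> = \<gamma>1 * (\<Lambda> * (2 * \<gamma>2 - \<gamma>1)) / 4" by (simp add: algebra_simps)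
    also have "\<dots> < \<gamma>1" using \<gamma> \<Lambda> by simp
    finally show ?thesis .
  qed
  ultimately show ?thesis using \<sigma> S_high third by (intro exI[of _ \<sigma>]) auto
qed

section \<open>Consensus under slowly varying weights\<close>

definition center :: "nat \<Rightarrow> (nat \<Rightarrow> real) \<Rightarrow> nat \<Rightarrow> real" where
  "center N x = (\<lambda>i. if i < N then x i - (\<Sum>j<N. x j) / real N else 0)"

lemma sum_center: "N > 0 \<Longrightarrow> (\<Sum>i<N. center N x i) = 0"
  by (simp add: center_def sum_subtractf)

lemma center_diff: "i < N \<Longrightarrow> j < N \<Longrightarrow> center N x i - center N x j = x i - x j"
  by (simp add: center_def)

lemma center_cong: "(\<And>i. i < N \<Longrightarrow> x i = y i) \<Longrightarrow> center N x = center N y"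
  by (auto simp: center_def intro!: ext sum.cong)

lemma center_add: "center N (\<lambda>i. x i + y i) = (\<lambda>i. center N x i + center N y i)"
  by (auto simp: center_def sum.distrib add_divide_distrib intro!: ext)

lemma lap_center: "lap N W (center N x) = lap N W x"
proof -
  have "lap N W (center N x) = lap N W (\<lambda>i. x i - (\<Sum>j<N. x j) / real N)"
    by (rule lap_cong) (simp add: center_def)
  thus ?thesis by (simp add: lap_shift)
qed

lemma center_vel_step:
  assumes "symmetric_weights N W"
  shows "center N (vel_step N W \<gamma>1 \<gamma>2 p v) = vel_step N W \<gamma>1 \<gamma>2 (center N p) (center N v)"
proof (rule ext)
  fix i
  have "(\<Sum>j<N. vel_step N W \<gamma>1 \<gamma>2 p v j) = (\<Sum>j<N. v j)"
    using lap_sum_zero[OF assms, of p] lap_sum_zero[OF assms, of v]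
    by (simp add: vel_step_def sum_subtractf sum.distrib sum_distrib_left[symmetric])
  note sum_eq = this
  show "center N (vel_step N W \<gamma>1 \<gamma>2 p v) i = vel_step N W \<gamma>1 \<gamma>2 (center N p) (center N v) i"
  proof (cases "i < N")
    case True
    thus ?thesis using sum_eq unfolding vel_step_def lap_center by (simp add: center_def)
  next
    case False
    thus ?thesis by (simp add: center_def vel_step_def lap_def)
  qed
qed

lemma tendsto_zero_of_square_le_geometric:
  fixes f :: "nat \<Rightarrow> real"
  assumes bound: "\<And>k. (f k)\<^sup>2 \<le> C * \<rho> ^ k" and "0 \<le> \<rho>" "\<rho> < 1"
  shows "f \<longlonglongrightarrow> 0"
proof (rule Lim_null_comparison)
  show "\<forall>\<^sub>F k in sequentially. norm (f k) \<le> sqrt (C * \<rho> ^ k)"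
    using bound by (intro always_eventually allI) (metis real_norm_def real_sqrt_abs real_sqrt_le_mono)
  have "(\<lambda>k. C * \<rho> ^ k) \<longlonglongrightarrow> C * 0"
    by (intro tendsto_mult tendsto_const LIMSEQ_power_zero) (use assms in auto)
  thus "(\<lambda>k. sqrt (C * \<rho> ^ k)) \<longlonglongrightarrow> 0" using tendsto_real_sqrt by fastforce
qed

lemma consensus_of_lyapunov_contraction:
  assumes "N > 0" and \<rho>: "0 \<le> \<rho>" "\<rho> < 1" and "\<epsilon> > 0"
    and contraction: "\<forall>W W' p v. spectral_bounds N c \<Lambda> W \<longrightarrow> (\<forall>i<N. \<forall>j<N. \<bar>W' i j - W i j\<bar> \<le> d) \<longrightarrow>
       (\<Sum>i<N. p i) = 0 \<longrightarrow> (\<Sum>i<N. v i) = 0 \<longrightarrow>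
       lyapunov N W' \<gamma>1 \<kappa> \<sigma> (\<lambda>i. p i + v i) (vel_step N W \<gamma>1 \<gamma>2 p v) \<le> \<rho> * lyapunov N W \<gamma>1 \<kappa> \<sigma> p v"
    and lower: "\<forall>W p v. spectral_bounds N c \<Lambda> W \<longrightarrow> (\<Sum>i<N. p i) = 0 \<longrightarrow>
       \<epsilon> * (dot N p p + dot N v v) \<le> lyapunov N W \<gamma>1 \<kappa> \<sigma> p v"
    and W: "\<forall>k. spectral_bounds N c \<Lambda> (W k)"
    and W_close: "\<forall>k. \<forall>i<N. \<forall>j<N. \<bar>W (Suc k) i j - W k i j\<bar> \<le> d"
    and step: "\<forall>k. \<forall>i<N. p (Suc k) i = p k i + v k i \<and> v (Suc k) i = vel_step N (W k) \<gamma>1 \<gamma>2 (p k) (v k) i"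
  shows "\<forall>i<N. \<forall>j<N. (\<lambda>k. p k i - p k j) \<longlonglongrightarrow> 0 \<and> (\<lambda>k. v k i - v k j) \<longlonglongrightarrow> 0"
proof -
  have W': "spectral_bounds N c \<Lambda> (W k)" for k using W by blast
  define e where "e = (\<lambda>k. center N (p k))"
  define f where "f = (\<lambda>k. center N (v k))"
  define V where "V = (\<lambda>k. lyapunov N (W k) \<gamma>1 \<kappa> \<sigma> (e k) (f k))"
  have e_step: "e (Suc k) = (\<lambda>i. e k i + f k i)" for k
    unfolding e_def f_def using step by (simp add: center_cong[of N "p (Suc k)"] center_add)
  have f_step: "f (Suc k) = vel_step N (W k) \<gamma>1 \<gamma>2 (e k) (f k)" for k
    unfolding e_def f_def using step
    by (simp add: center_cong[of N "v (Suc k)"] center_vel_step[OF spectral_boundsD(1)[OF W']])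
  have "V (Suc k) \<le> \<rho> * V k" for k
    using contraction[rule_format, OF W' W_close[rule_format] sum_center[OF \<open>N > 0\<close>] sum_center[OF \<open>N > 0\<close>]]
    unfolding V_def e_step f_step unfolding e_def f_def .
  hence V_decay: "V k \<le> \<rho> ^ k * V 0" for k
    by (induction k) (auto intro: order_trans mult_left_mono[OF _ \<rho>(1)] simp: mult.assoc)
  have e_f_decay: "dot N (e k) (e k) \<le> V 0 / \<epsilon> * \<rho> ^ k" "dot N (f k) (f k) \<le> V 0 / \<epsilon> * \<rho> ^ k" for k
  proof -
    have "\<epsilon> * (dot N (e k) (e k) + dot N (f k) (f k)) \<le> V k"
      using lower[rule_format, OF W'[of k] sum_center[OF \<open>N > 0\<close>, of "p k"], of "center N (v k)"]
      unfolding V_def e_def f_def .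
    hence "\<epsilon> * dot N (e k) (e k) + \<epsilon> * dot N (f k) (f k) \<le> \<rho> ^ k * V 0"
      using V_decay[of k] by (simp add: distrib_left)
    moreover have "0 \<le> \<epsilon> * dot N (e k) (e k)" "0 \<le> \<epsilon> * dot N (f k) (f k)"
      using \<open>\<epsilon> > 0\<close> by (simp_all add: dot_self_nonneg)
    ultimately have "\<epsilon> * dot N (e k) (e k) \<le> \<rho> ^ k * V 0" "\<epsilon> * dot N (f k) (f k) \<le> \<rho> ^ k * V 0"
      by linarith+
    thus "dot N (e k) (e k) \<le> V 0 / \<epsilon> * \<rho> ^ k" "dot N (f k) (f k) \<le> V 0 / \<epsilon> * \<rho> ^ k"
      using \<open>\<epsilon> > 0\<close> by (simp_all add: field_simps)
  qed
  show ?thesis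
  proof (intro allI impI conjI)
    fix i j assume ij: "i < N" "j < N"
    have e_sq: "(e k i - e k j)\<^sup>2 \<le> 4 * V 0 / \<epsilon> * \<rho> ^ k"
      and f_sq: "(f k i - f k j)\<^sup>2 \<le> 4 * V 0 / \<epsilon> * \<rho> ^ k" for k
      using diff_square_le_dot_self[OF ij, of "e k"] diff_square_le_dot_self[OF ij, of "f k"] e_f_decay[of k]
      by simp_all
    have "(\<lambda>k. e k i - e k j) \<longlonglongrightarrow> 0" "(\<lambda>k. f k i - f k j) \<longlonglongrightarrow> 0"
      using tendsto_zero_of_square_le_geometric[OF e_sq \<rho>] tendsto_zero_of_square_le_geometric[OF f_sq \<rho>] .
    moreover have "p k i - p k j = e k i - e k j" "v k i - v k j = f k i - f k j" for k
      unfolding e_def f_def using center_diff[OF ij] by simp_all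
    ultimately show "(\<lambda>k. p k i - p k j) \<longlonglongrightarrow> 0" "(\<lambda>k. v k i - v k j) \<longlonglongrightarrow> 0" by simp_all
  qed
qed

lemma switching_consensus:
  assumes "N > 0" and \<gamma>: "0 < \<gamma>1" "\<gamma>1 < \<gamma>2" and "0 < c" and \<Lambda>: "0 < \<Lambda>" "\<Lambda> * (2 * \<gamma>2 - \<gamma>1) < 4"
  shows "\<exists>d>0. \<forall>W p v. (\<forall>k. spectral_bounds N c \<Lambda> (W k)) \<longrightarrow>
     (\<forall>k. \<forall>i<N. \<forall>j<N. \<bar>W (Suc k) i j - W k i j\<bar> \<le> d) \<longrightarrow>
     (\<forall>k. \<forall>i<N. p (Suc k) i = p k i + v k i \<and> v (Suc k) i = vel_step N (W k) \<gamma>1 \<gamma>2 (p k) (v k) i) \<longrightarrow>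
     (\<forall>i<N. \<forall>j<N. (\<lambda>k. p k i - p k j) \<longlonglongrightarrow> 0 \<and> (\<lambda>k. v k i - v k j) \<longlonglongrightarrow> 0)"
proof -
  obtain \<sigma> where \<sigma>: "2 * \<sigma> > \<gamma>1" "2 * \<sigma> < 2 * \<gamma>2 - \<gamma>1"
      "2 * \<sigma> - (2 * \<gamma>2 - \<gamma>1) + \<Lambda> * ((\<gamma>2 - \<sigma>) * (\<gamma>2 - \<gamma>1)) < 0"
      "\<gamma>1 + (\<sigma> * (\<gamma>1 + \<gamma>2) - \<gamma>1 * \<gamma>2 - \<sigma>\<^sup>2) * \<Lambda> > 0"
    using exists_lyapunov_gain[OF \<gamma> \<Lambda>] by blast
  obtain \<rho> d \<epsilon> where "0 < d" "0 \<le> \<rho>" "\<rho> < 1" "0 < \<epsilon>"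
    and contraction: "\<forall>W W' p v. spectral_bounds N c \<Lambda> W \<longrightarrow> (\<forall>i<N. \<forall>j<N. \<bar>W' i j - W i j\<bar> \<le> d) \<longrightarrow>
       (\<Sum>i<N. p i) = 0 \<longrightarrow> (\<Sum>i<N. v i) = 0 \<longrightarrow>
       lyapunov N W' \<gamma>1 (\<sigma> * (\<gamma>1 + \<gamma>2) - \<gamma>1 * \<gamma>2) \<sigma> (\<lambda>i. p i + v i) (vel_step N W \<gamma>1 \<gamma>2 p v)
         \<le> \<rho> * lyapunov N W \<gamma>1 (\<sigma> * (\<gamma>1 + \<gamma>2) - \<gamma>1 * \<gamma>2) \<sigma> p v"
    and lower: "\<forall>W p v. spectral_bounds N c \<Lambda> W \<longrightarrow> (\<Sum>i<N. p i) = 0 \<longrightarrow>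
       \<epsilon> * (dot N p p + dot N v v) \<le> lyapunov N W \<gamma>1 (\<sigma> * (\<gamma>1 + \<gamma>2) - \<gamma>1 * \<gamma>2) \<sigma> p v"
    using lyapunov_contraction[where N = N, OF \<gamma>(1) \<Lambda>(1) \<open>0 < c\<close> refl \<sigma>]
    by (elim exE conjE) (rule that)
  show ?thesis
  proof (rule exI[of _ d], rule conjI[OF \<open>0 < d\<close>], (rule allI)+, (rule impI)+)
    fix W p v
    assume "\<forall>k. spectral_bounds N c \<Lambda> (W k)" "\<forall>k. \<forall>i<N. \<forall>j<N. \<bar>W (Suc k) i j - W k i j\<bar> \<le> d"
      "\<forall>k. \<forall>i<N. p (Suc k) i = p k i + v k i \<and> v (Suc k) i = vel_step N (W k) \<gamma>1 \<gamma>2 (p k) (v k) i"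
    thus "\<forall>i<N. \<forall>j<N. (\<lambda>k. p k i - p k j) \<longlonglongrightarrow> 0 \<and> (\<lambda>k. v k i - v k j) \<longlonglongrightarrow> 0"
      by (rule consensus_of_lyapunov_contraction[OF \<open>N > 0\<close> \<open>0 \<le> \<rho>\<close> \<open>\<rho> < 1\<close> \<open>0 < \<epsilon>\<close> contraction lower])
  qed
qed

lemma spectral_bounds_of_near:
  assumes W: "symmetric_weights N W" "nonneg_weights N W" and A: "symmetric_weights N A" "nonneg_weights N A"
    and close: "\<forall>i<N. \<forall>j<N. \<bar>W i j - A i j\<bar> \<le> \<delta>"
    and margin: "\<forall>i<N. \<forall>j<N. 0 < A i j \<longrightarrow> 2 * \<delta> \<le> A i j"
    and upper: "\<forall>y. lap_form N A y \<le> \<Lambda>0 * dot N y y"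
    and coercive: "\<forall>y. (\<Sum>i<N. y i) = 0 \<longrightarrow> c * dot N y y \<le> lap_form N A y"
    and "0 \<le> \<delta>" "\<Lambda>0 + 2 * real N * \<delta> \<le> \<Lambda>"
  shows "spectral_bounds N (c / 2) \<Lambda> W"
  unfolding spectral_bounds_def
proof (intro conjI allI impI W)
  fix y
  have A\<delta>: "symmetric_weights N (\<lambda>i j. A i j + \<delta>)" using A(1) unfolding symmetric_weights_def by simp
  have "lap_form N W y \<le> lap_form N (\<lambda>i j. A i j + \<delta>) y"
  proof (rule lap_form_mono[OF W(1) A\<delta>])
    fix i j assume "i < N" "j < N"
    thus "W i j \<le> A i j + \<delta>" using close[rule_format, of i j] by (simp add: abs_le_iff)
  qed
  also have "\<dots> \<le> \<Lambda>0 * dot N y y + \<delta> * (4 * real N * dot N y y) / 2"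
    unfolding lap_form_add_const_weights[OF A(1)]
    using upper double_sum_diff_square_le[where N = N and y = y] \<open>0 \<le> \<delta>\<close>
    by (intro add_mono divide_right_mono mult_left_mono) auto
  also have "\<dots> = (\<Lambda>0 + 2 * real N * \<delta>) * dot N y y" by (simp add: algebra_simps)
  also have "\<dots> \<le> \<Lambda> * dot N y y"
    using \<open>\<Lambda>0 + 2 * real N * \<delta> \<le> \<Lambda>\<close> dot_self_nonneg[of N y] by (rule mult_right_mono)
  finally show "lap_form N W y \<le> \<Lambda> * dot N y y" .
next
  fix y :: "nat \<Rightarrow> real" assume "(\<Sum>i<N. y i) = 0"
  have half: "symmetric_weights N (\<lambda>i j. 1 / 2 * A i j)" using A(1) unfolding symmetric_weights_def by simp
  have "c / 2 * dot N y y \<le> 1 / 2 * lap_form N A y" using coercive \<open>(\<Sum>i<N. y i) = 0\<close> by simp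
  also have "\<dots> = lap_form N (\<lambda>i j. 1 / 2 * A i j) y" by (rule lap_form_scale_weights[symmetric])
  also have "\<dots> \<le> lap_form N W y"
  proof (rule lap_form_mono[OF half W(1)])
    fix i j assume "i < N" "j < N"
    thus "1 / 2 * A i j \<le> W i j"
      using close[rule_format, of i j] margin[rule_format, of i j] W(2) A(2) \<open>i < N\<close> \<open>j < N\<close>
      unfolding nonneg_weights_def by (cases "0 < A i j") (force simp: abs_le_iff)+
  qed
  finally show "c / 2 * dot N y y \<le> lap_form N W y" .
qed

lemma exists_min_positive_entry:
  fixes A :: "nat \<Rightarrow> nat \<Rightarrow> real"
  shows "\<exists>m>0. \<forall>i<N. \<forall>j<N. 0 < A i j \<longrightarrow> m \<le> A i j"
proof -
  define E where "E = {A i j | i j. i < N \<and> j < N \<and> 0 < A i j}"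
  have "E \<subseteq> (\<lambda>(i, j). A i j) ` ({..<N} \<times> {..<N})" unfolding E_def by auto
  hence "finite (insert 1 E)" by (simp add: finite_subset)
  have "\<forall>x\<in>insert 1 E. 0 < x" unfolding E_def by auto
  hence "0 < Min (insert 1 E)" using \<open>finite (insert 1 E)\<close> by (simp add: Min_gr_iff)
  moreover have "Min (insert 1 E) \<le> A i j" if "i < N" "j < N" "0 < A i j" for i j
    using \<open>finite (insert 1 E)\<close> that unfolding E_def by (intro Min_le) auto
  ultimately show ?thesis by blast
qed

definition consensus_margin :: "nat \<Rightarrow> (nat \<Rightarrow> nat \<Rightarrow> real) \<Rightarrow> real \<Rightarrow> real \<Rightarrow> real \<Rightarrow> bool" where
  "consensus_margin N A \<gamma>1 \<gamma>2 \<delta> \<longleftrightarrow>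
    (\<forall>W p v. (\<forall>k. symmetric_weights N (W k) \<and> nonneg_weights N (W k) \<and>
                   (\<forall>i<N. \<forall>j<N. \<bar>W k i j - A i j\<bar> \<le> \<delta>)) \<longrightarrow>
       (\<forall>k. \<forall>i<N. p (Suc k) i = p k i + v k i \<and> v (Suc k) i = vel_step N (W k) \<gamma>1 \<gamma>2 (p k) (v k) i) \<longrightarrow>
       (\<forall>i<N. \<forall>j<N. (\<lambda>k. p k i - p k j) \<longlonglongrightarrow> 0 \<and> (\<lambda>k. v k i - v k j) \<longlonglongrightarrow> 0))"

lemma robust_consensus_near_weights:
  assumes "N > 0" and A: "symmetric_weights N A" "nonneg_weights N A"
    and upper: "\<forall>y. lap_form N A y \<le> \<Lambda>0 * dot N y y" and "0 \<le> \<Lambda>0" and gain: "\<Lambda>0 * (2 * \<gamma>2 - \<gamma>1) < 4"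
    and "0 < c" and coercive: "\<forall>y. (\<Sum>i<N. y i) = 0 \<longrightarrow> c * dot N y y \<le> lap_form N A y"
    and \<gamma>: "0 < \<gamma>1" "\<gamma>1 < \<gamma>2"
  shows "\<exists>\<delta>>0. (\<forall>i<N. \<forall>j<N. 0 < A i j \<longrightarrow> 2 * \<delta> \<le> A i j) \<and> consensus_margin N A \<gamma>1 \<gamma>2 \<delta>"
proof -
  have "\<Lambda>0 < 4 / (2 * \<gamma>2 - \<gamma>1)" using gain \<gamma> by (simp add: field_simps)
  then obtain \<Lambda> where \<Lambda>: "\<Lambda>0 < \<Lambda>" "\<Lambda> < 4 / (2 * \<gamma>2 - \<gamma>1)" using dense by blast
  hence \<Lambda>_pos: "0 < \<Lambda>" and \<Lambda>_gain: "\<Lambda> * (2 * \<gamma>2 - \<gamma>1) < 4"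
    using \<open>0 \<le> \<Lambda>0\<close> \<gamma> by (simp_all add: field_simps)
  have "0 < c / 2" using \<open>0 < c\<close> by simp
  obtain d where "d > 0" and switching: "\<forall>W p v. (\<forall>k. spectral_bounds N (c / 2) \<Lambda> (W k)) \<longrightarrow>
     (\<forall>k. \<forall>i<N. \<forall>j<N. \<bar>W (Suc k) i j - W k i j\<bar> \<le> d) \<longrightarrow>
     (\<forall>k. \<forall>i<N. p (Suc k) i = p k i + v k i \<and> v (Suc k) i = vel_step N (W k) \<gamma>1 \<gamma>2 (p k) (v k) i) \<longrightarrow>
     (\<forall>i<N. \<forall>j<N. (\<lambda>k. p k i - p k j) \<longlonglongrightarrow> 0 \<and> (\<lambda>k. v k i - v k j) \<longlonglongrightarrow> 0)"
    using switching_consensus[OF \<open>N > 0\<close> \<gamma> \<open>0 < c / 2\<close> \<Lambda>_pos \<Lambda>_gain] by (elim exE conjE) (rule that)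
  obtain m where "m > 0" and m: "\<forall>i<N. \<forall>j<N. 0 < A i j \<longrightarrow> m \<le> A i j"
    using exists_min_positive_entry[of N A] by (elim exE conjE) (rule that)
  define \<delta> where "\<delta> = min (m / 2) (min ((\<Lambda> - \<Lambda>0) / (2 * real N)) (d / 2))"
  have "0 < \<delta>" unfolding \<delta>_def using \<open>m > 0\<close> \<Lambda>(1) \<open>N > 0\<close> \<open>d > 0\<close> by simp
  have margin: "\<forall>i<N. \<forall>j<N. 0 < A i j \<longrightarrow> 2 * \<delta> \<le> A i j" using m unfolding \<delta>_def by force
  have "\<delta> \<le> (\<Lambda> - \<Lambda>0) / (2 * real N)" unfolding \<delta>_def by simp
  hence "\<Lambda>0 + 2 * real N * \<delta> \<le> \<Lambda>" using \<open>N > 0\<close> by (simp add: field_simps)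
  show ?thesis
    unfolding consensus_margin_def
  proof (rule exI[of _ \<delta>], intro conjI \<open>0 < \<delta>\<close> margin, (rule allI)+, (rule impI)+)
    fix W :: "nat \<Rightarrow> nat \<Rightarrow> nat \<Rightarrow> real" and p v :: "nat \<Rightarrow> nat \<Rightarrow> real"
    assume W: "\<forall>k. symmetric_weights N (W k) \<and> nonneg_weights N (W k) \<and>
      (\<forall>i<N. \<forall>j<N. \<bar>W k i j - A i j\<bar> \<le> \<delta>)"
    hence Wk: "symmetric_weights N (W k)" "nonneg_weights N (W k)"
      "\<forall>i<N. \<forall>j<N. \<bar>W k i j - A i j\<bar> \<le> \<delta>" for k
      by blast+
    have "\<forall>k. spectral_bounds N (c / 2) \<Lambda> (W k)"
      using spectral_bounds_of_near[OF Wk(1,2) A Wk(3) margin upper coercive less_imp_le[OF \<open>0 < \<delta>\<close>]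
            \<open>\<Lambda>0 + 2 * real N * \<delta> \<le> \<Lambda>\<close>] by blast
    moreover have "\<forall>k. \<forall>i<N. \<forall>j<N. \<bar>W (Suc k) i j - W k i j\<bar> \<le> d"
    proof (intro allI impI)
      fix k i j assume "i < N" "j < N"
      hence "\<bar>W (Suc k) i j - A i j\<bar> \<le> \<delta>" "\<bar>W k i j - A i j\<bar> \<le> \<delta>" using Wk(3) by blast+
      moreover have "2 * \<delta> \<le> d" unfolding \<delta>_def by simp
      ultimately show "\<bar>W (Suc k) i j - W k i j\<bar> \<le> d" by (simp add: abs_le_iff)
    qed
    moreover assume "\<forall>k. \<forall>i<N. p (Suc k) i = p k i + v k i \<and> v (Suc k) i = vel_step N (W k) \<gamma>1 \<gamma>2 (p k) (v k) i"
    ultimately show "\<forall>i<N. \<forall>j<N. (\<lambda>k. p k i - p k j) \<longlonglongrightarrow> 0 \<and> (\<lambda>k. v k i - v k j) \<longlonglongrightarrow> 0"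
      by (rule switching[THEN spec[of _ W], THEN spec[of _ p], THEN spec[of _ v], THEN mp, THEN mp, THEN mp])
  qed
qed

section \<open>Factorised weights\<close>

text \<open>The diagonal of a weight matrix is irrelevant to the control law, so only the
  off-diagonal part of the applied weights needs to be compared with \<open>A\<^sup>(\<^sup>0\<^sup>)\<close>.\<close>
definition offdiag :: "(nat \<Rightarrow> nat \<Rightarrow> real) \<Rightarrow> nat \<Rightarrow> nat \<Rightarrow> real" where
  "offdiag a = (\<lambda>i j. if i = j then 0 else a i j)"

lemma control_law_eq_vel_step:
  assumes "i < N"
  shows "v i + (\<Sum>j<N. \<gamma>1 * a i j * (p j - p i) + \<gamma>2 * a i j * (v j - v i))
    = vel_step N (offdiag a) \<gamma>1 \<gamma>2 p v i"
proof -
  have "(\<Sum>j<N. \<gamma>1 * a i j * (p j - p i) + \<gamma>2 * a i j * (v j - v i))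
      = - (\<Sum>j<N. \<gamma>1 * (offdiag a i j * (p i - p j)) + \<gamma>2 * (offdiag a i j * (v i - v j)))"
    unfolding sum_negf[symmetric] by (intro sum.cong refl) (simp add: offdiag_def algebra_simps)
  thus ?thesis using assms
    by (simp add: vel_step_def lap_def sum.distrib sum_distrib_left)
qed

lemma factor_product_bounds:
  fixes A d x y :: real
  assumes "0 < A - d" and x: "x \<in> {sqrt (A - d)<..<sqrt (A + d)}" and y: "y \<in> {sqrt (A - d)<..<sqrt (A + d)}"
  shows "A - d < x * y" "x * y < A + d"
proof -
  have x': "sqrt (A - d) < x" "x < sqrt (A + d)" and y': "sqrt (A - d) < y" "y < sqrt (A + d)"
    using x y by auto
  have s: "0 \<le> sqrt (A - d)" using assms(1) by simp
  have "0 < x" "0 < y" using s x' y' by linarith+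
  have "sqrt (A - d) * sqrt (A - d) < x * y" by (rule mult_strict_mono[OF x'(1) y'(1) \<open>0 < x\<close> s])
  thus "A - d < x * y" using assms(1) by simp
  have "0 < sqrt (A + d)" using \<open>0 < x\<close> x' by linarith
  hence "x * y < sqrt (A + d) * sqrt (A + d)"
    by (rule mult_strict_mono[OF x'(2) y'(2) _ less_imp_le[OF \<open>0 < y\<close>]])
  moreover have "0 \<le> A + d" using \<open>0 < sqrt (A + d)\<close> by simp
  ultimately show "x * y < A + d" by simp
qed

lemma factored_weights_near:
  assumes sym: "\<forall>i<N. \<forall>j<N. A i j = A j i" and nonneg: "\<forall>i<N. \<forall>j<N. 0 \<le> A i j"
    and diag: "\<forall>i<N. A i i = 0"
    and margin: "\<forall>i<N. \<forall>j<N. 0 < A i j \<longrightarrow> 2 * \<delta> \<le> A i j" and "0 < \<delta>"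
    and a: "\<forall>i<N. \<forall>j<N. i \<noteq> j \<longrightarrow>
      (if A i j > 0 then a i j = \<alpha> i j * \<alpha> j i \<and> \<alpha> i j \<in> {sqrt (A i j - \<delta>) <..< sqrt (A i j + \<delta>)}
       else a i j = 0)"
  shows "symmetric_weights N (offdiag a)" "nonneg_weights N (offdiag a)"
    and "\<forall>i<N. \<forall>j<N. \<bar>offdiag a i j - A i j\<bar> \<le> \<delta>"
proof -
  have edge: "A i j - \<delta> < a i j \<and> a i j < A i j + \<delta> \<and> a i j = a j i"
    if "i < N" "j < N" "i \<noteq> j" "0 < A i j" for i j
  proof -
    have A: "0 < A i j - \<delta>" "A j i = A i j" using margin sym \<open>0 < \<delta>\<close> that by force+
    have ij: "a i j = \<alpha> i j * \<alpha> j i" "\<alpha> i j \<in> {sqrt (A i j - \<delta>) <..< sqrt (A i j + \<delta>)}"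
      using a[rule_format, of i j] that by auto
    have ji: "a j i = \<alpha> j i * \<alpha> i j" "\<alpha> j i \<in> {sqrt (A i j - \<delta>) <..< sqrt (A i j + \<delta>)}"
      using a[rule_format, of j i] that A(2) by auto
    show ?thesis using factor_product_bounds[OF A(1) ij(2) ji(2)] ij(1) ji(1) by (simp add: mult.commute)
  qed
  have non_edge: "a i j = 0 \<and> A i j = 0" if "i < N" "j < N" "i \<noteq> j" "\<not> 0 < A i j" for i j
    using a[rule_format, of i j] nonneg that by force
  show "symmetric_weights N (offdiag a)"
    unfolding symmetric_weights_def offdiag_def
  proof (intro allI impI)
    fix i j assume "i < N" "j < N"
    thus "(if i = j then 0 else a i j) = (if j = i then 0 else a j i)"
      using edge non_edge[of i j] non_edge[of j i] sym by (cases "0 < A i j") auto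
  qed
  show "nonneg_weights N (offdiag a)"
    unfolding nonneg_weights_def offdiag_def
  proof (intro allI impI)
    fix i j assume "i < N" "j < N"
    thus "0 \<le> (if i = j then 0 else a i j)"
      using edge[of i j] non_edge[of i j] margin[rule_format, of i j] \<open>0 < \<delta>\<close>
      by (cases "i = j"; cases "0 < A i j") auto
  qed
  show "\<forall>i<N. \<forall>j<N. \<bar>offdiag a i j - A i j\<bar> \<le> \<delta>"
    unfolding offdiag_def
  proof (intro allI impI)
    fix i j assume "i < N" "j < N"
    thus "\<bar>(if i = j then 0 else a i j) - A i j\<bar> \<le> \<delta>"
      using edge[of i j] non_edge[of i j] diag[rule_format, of i] \<open>0 < \<delta>\<close>
      by (cases "i = j"; cases "0 < A i j") (auto simp: abs_le_iff)
  qed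
qed

lemma factored_weights_consensus:
  assumes sym: "\<forall>i<N. \<forall>j<N. A i j = A j i" and nonneg: "\<forall>i<N. \<forall>j<N. 0 \<le> A i j"
    and diag: "\<forall>i<N. A i i = 0" and "0 < \<delta>"
    and margin: "\<forall>i<N. \<forall>j<N. 0 < A i j \<longrightarrow> 2 * \<delta> \<le> A i j"
    and robust: "consensus_margin N A \<gamma>1 \<gamma>2 \<delta>"
    and weights: "\<forall>k. \<forall>i<N. \<forall>j<N. i \<noteq> j \<longrightarrow>
      (if A i j > 0 then a k i j = \<alpha> k i j * \<alpha> k j i \<and> \<alpha> k i j \<in> {sqrt (A i j - \<delta>) <..< sqrt (A i j + \<delta>)}
       else a k i j = 0)"
    and p_step: "\<forall>k. \<forall>i<N. p (Suc k) i = p k i + v k i"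
    and v_step: "\<forall>k. \<forall>i<N. v (Suc k) i = v k i +
      (\<Sum>j<N. \<gamma>1 * a k i j * (p k j - p k i) + \<gamma>2 * a k i j * (v k j - v k i))"
  shows "\<forall>i<N. \<forall>j<N. (\<lambda>k. p k i - p k j) \<longlonglongrightarrow> 0 \<and> (\<lambda>k. v k i - v k j) \<longlonglongrightarrow> 0"
proof -
  have "symmetric_weights N (offdiag (a k)) \<and> nonneg_weights N (offdiag (a k)) \<and>
      (\<forall>i<N. \<forall>j<N. \<bar>offdiag (a k) i j - A i j\<bar> \<le> \<delta>)" for k
    using factored_weights_near[OF sym nonneg diag margin \<open>0 < \<delta>\<close>, of "a k" "\<alpha> k"] weights by blast
  moreover have "p (Suc k) i = p k i + v k i \<and> v (Suc k) i = vel_step N (offdiag (a k)) \<gamma>1 \<gamma>2 (p k) (v k) i"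
    if "i < N" for k i
    using p_step v_step control_law_eq_vel_step[OF that] that by simp
  ultimately show ?thesis
    by (intro robust[unfolded consensus_margin_def, THEN spec[of _ "\<lambda>k. offdiag (a k)"],
          THEN spec[of _ p], THEN spec[of _ v], THEN mp, THEN mp]) blast+
qed

lemma eigenvalue_gain_bound:
  fixes \<mu> \<gamma>1 \<gamma>2 :: real
  assumes "0 \<le> \<mu>" and "\<mu> \<noteq> 0 \<Longrightarrow> \<gamma>1 - 2 * \<gamma>2 > - 4 / \<mu>"
  shows "\<mu> * (2 * \<gamma>2 - \<gamma>1) < 4"
proof (cases "\<mu> = 0")
  case False
  hence "\<mu> * (- 4 / \<mu>) < \<mu> * (\<gamma>1 - 2 * \<gamma>2)" using assms by (intro mult_strict_left_mono) auto
  thus ?thesis using False by (simp add: algebra_simps)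
qed simp

theorem theorem3:
  fixes N :: nat and A0 :: "nat \<Rightarrow> nat \<Rightarrow> real" and \<gamma>1 \<gamma>2 :: real
  assumes sym: "\<forall>i<N. \<forall>j<N. A0 i j = A0 j i"
    and nonneg: "\<forall>i<N. \<forall>j<N. A0 i j \<ge> 0"
    and diag: "\<forall>i<N. A0 i i = 0"
    and conn: "graph_connected N A0"
    and gam: "\<gamma>2 > \<gamma>1" "\<gamma>1 > 0"
    and eig: "\<forall>\<mu>. lap_eigenvalue N A0 \<mu> \<and> \<mu> \<noteq> 0 \<longrightarrow> \<gamma>1 - 2 * \<gamma>2 > - 4 / \<mu>"
  shows "\<exists>\<delta>>0. (\<forall>i<N. \<forall>j<N. A0 i j > 0 \<longrightarrow> \<delta> < A0 i j) \<and>
    (\<forall>(a :: nat \<Rightarrow> nat \<Rightarrow> nat \<Rightarrow> real) (\<alpha> :: nat \<Rightarrow> nat \<Rightarrow> nat \<Rightarrow> real)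
        (p :: nat \<Rightarrow> nat \<Rightarrow> real) (v :: nat \<Rightarrow> nat \<Rightarrow> real).
      (\<forall>k. \<forall>i<N. \<forall>j<N. i \<noteq> j \<longrightarrow>
          (if A0 i j > 0 then
             a k i j = \<alpha> k i j * \<alpha> k j i \<and>
             \<alpha> k i j \<in> {sqrt (A0 i j - \<delta>) <..< sqrt (A0 i j + \<delta>)}
           else a k i j = 0)) \<and>
      (\<forall>k. \<forall>i<N. p (Suc k) i = p k i + v k i) \<and>
      (\<forall>k. \<forall>i<N. v (Suc k) i = v k i +
          (\<Sum>j<N. \<gamma>1 * a k i j * (p k j - p k i) + \<gamma>2 * a k i j * (v k j - v k i)))
      \<longrightarrow> (\<forall>i<N. \<forall>j<N. (\<lambda>k. p k i - p k j) \<longlonglongrightarrow> 0 \<and> (\<lambda>k. v k i - v k j) \<longlonglongrightarrow> 0))"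
proof (cases "N < 2")
  case True
  hence "i = j" if "i < N" "j < N" for i j using that by simp
  hence "\<forall>i<N. \<forall>j<N. \<not> 0 < A0 i j \<and> (\<lambda>k. p k i - p k j) = (\<lambda>k. 0) \<and> (\<lambda>k. v k i - v k j) = (\<lambda>k. 0)"
    for p v :: "nat \<Rightarrow> nat \<Rightarrow> real"
    using diag by fastforce
  thus ?thesis by (intro exI[of _ 1]) auto
next
  case False
  hence "N \<ge> 2" "0 < N" by simp_all
  have A0: "symmetric_weights N A0" "nonneg_weights N A0"
    using sym nonneg unfolding symmetric_weights_def nonneg_weights_def by auto
  obtain \<Lambda>0 where "0 \<le> \<Lambda>0" "lap_eigenvalue N A0 \<Lambda>0" and upper: "\<forall>y. lap_form N A0 y \<le> \<Lambda>0 * dot N y y"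
    using exists_largest_lap_eigenvalue[OF _ A0 diag] \<open>N \<ge> 2\<close> by auto
  hence gain: "\<Lambda>0 * (2 * \<gamma>2 - \<gamma>1) < 4" using eig by (intro eigenvalue_gain_bound) auto
  obtain c where "c > 0" and coercive: "\<forall>y. (\<Sum>i<N. y i) = 0 \<longrightarrow> c * dot N y y \<le> lap_form N A0 y"
    using connected_lap_form_coercive[OF \<open>N \<ge> 2\<close> A0 conn] by auto
  obtain \<delta> where "\<delta> > 0" and margin: "\<forall>i<N. \<forall>j<N. 0 < A0 i j \<longrightarrow> 2 * \<delta> \<le> A0 i j"
    and robust: "consensus_margin N A0 \<gamma>1 \<gamma>2 \<delta>"
    using robust_consensus_near_weights[OF \<open>0 < N\<close> A0 upper \<open>0 \<le> \<Lambda>0\<close> gain \<open>c > 0\<close> coercive gam(2,1)]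
    by (elim exE conjE) (rule that)
  show ?thesis
  proof (rule exI[of _ \<delta>], intro conjI \<open>0 < \<delta>\<close>)
    show "\<forall>i<N. \<forall>j<N. A0 i j > 0 \<longrightarrow> \<delta> < A0 i j" using margin \<open>0 < \<delta>\<close> by force
  qed (use factored_weights_consensus[OF sym nonneg diag \<open>0 < \<delta>\<close> margin robust] in blast)
qed

end
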